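(* There exist $\epsilon_0>0$ and a positive function $\kappa$ on $(0,\epsilon_0)$ with $\kappa(\epsilon)\to0$ as $\epsilon\to0$ such that for every $\epsilon\in(0,\epsilon_0)$, every $L$, every $B\in\mathbb{R}$ and all operators $A,C$ on $\mathfrak{H}_\Lambda$, $$|\omega_B^{(\Lambda)}([C,A])|^2\le\sqrt{\tilde D_B^{(\Lambda)}(C)}\sqrt{\kappa(\epsilon)\,\omega_B^{(\Lambda)}(\{C,C^\ast\})+\omega_B^{(\Lambda)}([[C^\ast,H_{\rm p}^{(\Lambda)}(B)],C])}\times\Bigl\{\omega_B^{(\Lambda)}(A[\mathcal{H}_{\rm p}^{(\Lambda)}(B)]^\epsilon A^\ast)+\omega_B^{(\Lambda)}(A^\ast[\mathcal{H}_{\rm p}^{(\Lambda)}(B)]^\epsilon A)\Bigr\},$$ where $\tilde D_B^{(\Lambda)}(C)=\omega_B^{(\Lambda)}(CP_{\rm ex}^{(\Lambda)}(B)[\mathcal{H}_{\rm p}^{(\Lambda)}(B)]^{-1}C^\ast)+\omega_B^{(\Lambda)}(C^\ast P_{\rm ex}^{(\Lambda)}(B)[\mathcal{H}_{\rm p}^{(\Lambda)}(B)]^{-1}C)$.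
   Context: Spin-$S$ operators $S_x^{(i)}$ at sites of $\Lambda=\Lambda_L=\{-L+1,\dots,L\}^d$ (periodic boundary conditions) acting on $\mathfrak{H}_\Lambda=\bigotimes_{x\in\Lambda}\mathbb{C}^{2S+1}$; $H_{\rm p}^{(\Lambda)}(B)=\sum_{\{x,y\}\subset\Lambda:|x-y|=1}\mathbf{S}_x\cdot\mathbf{S}_y-B\sum_{x\in\Lambda}(-1)^{x^{(1)}+\cdots+x^{(d)}}S_x^{(3)}$. $E_0^{(\Lambda)}(B)$ is its ground-state energy, $\mathcal{H}_{\rm p}^{(\Lambda)}(B)=H_{\rm p}^{(\Lambda)}(B)-E_0^{(\Lambda)}(B)\ge0$, with powers defined by functional calculus ($0^\epsilon=0$). $P_0^{(\Lambda)}(B)$ is the projection onto the ground-state space, $P_{\rm ex}^{(\Lambda)}(B)=1-P_0^{(\Lambda)}(B)$, and $P_{\rm ex}^{(\Lambda)}(B)[\mathcal{H}_{\rm p}^{(\Lambda)}(B)]^{-1}$ denotes the inverse of $\mathcal{H}_{\rm p}^{(\Lambda)}(B)$ on the range of $P_{\rm ex}^{(\Lambda)}(B)$ (zero on the ground-state space). $\omega_B^{(\Lambda)}(\cdot)={\rm Tr}[P_0^{(\Lambda)}(B)(\cdot)]/{\rm Tr}P_0^{(\Lambda)}(B)$. $\{X,Y\}=XY+YX$. *)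

theory Defs
  imports Complex_Main
begin

text \<open>Spin S is encoded by n = 2S (a positive natural number).  The local
  basis of C^(2S+1) is indexed by k in {0..n}, with S^(3) eigenvalue m = k - n/2.
  Sites are integer lists of length d; a basis vector of the tensor product
  Hilbert space is a configuration sigma : site -> {0..n} (extended by 0 off the box).\<close>

type_synonym site = "int list"
type_synonym conf = "site \<Rightarrow> nat"
type_synonym op = "conf \<Rightarrow> conf \<Rightarrow> complex"

definition box :: "nat \<Rightarrow> nat \<Rightarrow> site set" where
  "box d L = {x. length x = d \<and> (\<forall>i<d. - int L + 1 \<le> x ! i \<and> x ! i \<le> int L)}"

definition confs :: "nat \<Rightarrow> nat \<Rightarrow> nat \<Rightarrow> conf set" where
  "confs n d L = {\<sigma>. (\<forall>x\<in>box d L. \<sigma> x \<le> n) \<and> (\<forall>x. x \<notin> box d L \<longrightarrow> \<sigma> x = 0)}"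

text \<open>Nearest neighbours with periodic boundary conditions (torus of side 2L).\<close>
definition nn :: "nat \<Rightarrow> nat \<Rightarrow> site \<Rightarrow> site \<Rightarrow> bool" where
  "nn d L x y \<longleftrightarrow> x \<in> box d L \<and> y \<in> box d L \<and>
     (\<exists>i<d. ((x ! i - y ! i) mod (2 * int L) = 1 \<or> (x ! i - y ! i) mod (2 * int L) = 2 * int L - 1)
        \<and> (\<forall>j<d. j \<noteq> i \<longrightarrow> x ! j = y ! j))"

definition mmul :: "conf set \<Rightarrow> op \<Rightarrow> op \<Rightarrow> op" where
  "mmul I A B = (\<lambda>\<sigma> \<tau>. \<Sum>\<rho>\<in>I. A \<sigma> \<rho> * B \<rho> \<tau>)"

definition mvec :: "conf set \<Rightarrow> op \<Rightarrow> (conf \<Rightarrow> complex) \<Rightarrow> conf \<Rightarrow> complex" where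
  "mvec I A v = (\<lambda>\<sigma>. \<Sum>\<tau>\<in>I. A \<sigma> \<tau> * v \<tau>)"

definition madd :: "op \<Rightarrow> op \<Rightarrow> op" where "madd A B = (\<lambda>\<sigma> \<tau>. A \<sigma> \<tau> + B \<sigma> \<tau>)"
definition msub :: "op \<Rightarrow> op \<Rightarrow> op" where "msub A B = (\<lambda>\<sigma> \<tau>. A \<sigma> \<tau> - B \<sigma> \<tau>)"
definition mscale :: "complex \<Rightarrow> op \<Rightarrow> op" where "mscale c A = (\<lambda>\<sigma> \<tau>. c * A \<sigma> \<tau>)"
definition mid :: op where "mid = (\<lambda>\<sigma> \<tau>. if \<sigma> = \<tau> then 1 else 0)"
definition madj :: "op \<Rightarrow> op" where "madj A = (\<lambda>\<sigma> \<tau>. cnj (A \<tau> \<sigma>))"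
definition mtr :: "conf set \<Rightarrow> op \<Rightarrow> complex" where "mtr I A = (\<Sum>\<sigma>\<in>I. A \<sigma> \<sigma>)"

definition comm :: "conf set \<Rightarrow> op \<Rightarrow> op \<Rightarrow> op" where
  "comm I X Y = msub (mmul I X Y) (mmul I Y X)"
definition acomm :: "conf set \<Rightarrow> op \<Rightarrow> op \<Rightarrow> op" where
  "acomm I X Y = madd (mmul I X Y) (mmul I Y X)"

definition eigvec :: "conf set \<Rightarrow> op \<Rightarrow> real \<Rightarrow> (conf \<Rightarrow> complex) \<Rightarrow> bool" where
  "eigvec I H lam v \<longleftrightarrow> (\<forall>\<sigma>. \<sigma> \<notin> I \<longrightarrow> v \<sigma> = 0) \<and> (\<exists>\<sigma>\<in>I. v \<sigma> \<noteq> 0) \<and>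
     (\<forall>\<sigma>\<in>I. mvec I H v \<sigma> = complex_of_real lam * v \<sigma>)"

definition spec :: "conf set \<Rightarrow> op \<Rightarrow> real set" where
  "spec I H = {lam. \<exists>v. eigvec I H lam v}"

text \<open>f(H): the operator acting as multiplication by f(lambda) on every eigenvector
  of H with eigenvalue lambda (well defined for self-adjoint H), zero off I.\<close>
definition fcalc :: "conf set \<Rightarrow> op \<Rightarrow> (real \<Rightarrow> real) \<Rightarrow> op" where
  "fcalc I H f = (THE M. (\<forall>\<sigma> \<tau>. \<sigma> \<notin> I \<or> \<tau> \<notin> I \<longrightarrow> M \<sigma> \<tau> = 0) \<and>
      (\<forall>lam v. eigvec I H lam v \<longrightarrow> (\<forall>\<sigma>\<in>I. mvec I M v \<sigma> = complex_of_real (f lam) * v \<sigma>)))"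

definition mval :: "nat \<Rightarrow> nat \<Rightarrow> real" where "mval n k = real k - real n / 2"

definition spP :: "nat \<Rightarrow> nat \<Rightarrow> nat \<Rightarrow> complex" where
  "spP n k l = (if k = l + 1 \<and> l < n then
      complex_of_real (sqrt ((real n / 2) * (real n / 2 + 1) - mval n l * (mval n l + 1))) else 0)"
definition spM :: "nat \<Rightarrow> nat \<Rightarrow> nat \<Rightarrow> complex" where
  "spM n k l = cnj (spP n l k)"

definition spin :: "nat \<Rightarrow> nat \<Rightarrow> nat \<Rightarrow> nat \<Rightarrow> complex" where
  "spin n a k l =
     (if a = 1 then (spP n k l + spM n k l) / 2
      else if a = 2 then (spP n k l - spM n k l) / (2 * \<i>)
      else (if k = l \<and> k \<le> n then complex_of_real (mval n k) else 0))"

text \<open>Embedding of a single-site matrix M at site x: M_x = M tensor identity.\<close>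
definition op_at :: "site \<Rightarrow> (nat \<Rightarrow> nat \<Rightarrow> complex) \<Rightarrow> op" where
  "op_at x M = (\<lambda>\<sigma> \<tau>. if (\<forall>z. z \<noteq> x \<longrightarrow> \<sigma> z = \<tau> z) then M (\<sigma> x) (\<tau> x) else 0)"

text \<open>H_p(B): sum over unordered nearest-neighbour pairs {x,y} of S_x.S_y
  (written as half the sum over ordered pairs) minus the staggered field term.\<close>
definition Hp :: "nat \<Rightarrow> nat \<Rightarrow> nat \<Rightarrow> real \<Rightarrow> op" where
  "Hp n d L B = (let I = confs n d L in
     (\<lambda>\<sigma> \<tau>. (1/2) * (\<Sum>(x,y)\<in>{(x,y). nn d L x y}. \<Sum>a\<in>{1,2,3::nat}.
                 mmul I (op_at x (spin n a)) (op_at y (spin n a)) \<sigma> \<tau>)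
            - complex_of_real B * (\<Sum>x\<in>box d L. (-1) ^ nat (\<bar>sum_list x\<bar>) * op_at x (spin n 3) \<sigma> \<tau>)))"

definition E0 :: "nat \<Rightarrow> nat \<Rightarrow> nat \<Rightarrow> real \<Rightarrow> real" where
  "E0 n d L B = Min (spec (confs n d L) (Hp n d L B))"

definition Hcal :: "nat \<Rightarrow> nat \<Rightarrow> nat \<Rightarrow> real \<Rightarrow> op" where
  "Hcal n d L B = msub (Hp n d L B) (mscale (complex_of_real (E0 n d L B)) mid)"

definition P0 :: "nat \<Rightarrow> nat \<Rightarrow> nat \<Rightarrow> real \<Rightarrow> op" where
  "P0 n d L B = fcalc (confs n d L) (Hp n d L B) (\<lambda>lam. if lam = E0 n d L B then 1 else 0)"

definition Pex :: "nat \<Rightarrow> nat \<Rightarrow> nat \<Rightarrow> real \<Rightarrow> op" where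
  "Pex n d L B = msub mid (P0 n d L B)"

text \<open>[Hcal]^eps with 0^eps = 0 (powr satisfies 0 powr e = 0).\<close>
definition Hpow :: "nat \<Rightarrow> nat \<Rightarrow> nat \<Rightarrow> real \<Rightarrow> real \<Rightarrow> op" where
  "Hpow n d L B \<epsilon> = fcalc (confs n d L) (Hcal n d L B) (\<lambda>x. x powr \<epsilon>)"

text \<open>Inverse of Hcal on the range of Pex, zero on the ground-state space (inverse 0 = 0).\<close>
definition Hinv :: "nat \<Rightarrow> nat \<Rightarrow> nat \<Rightarrow> real \<Rightarrow> op" where
  "Hinv n d L B = fcalc (confs n d L) (Hcal n d L B) inverse"

definition omega :: "nat \<Rightarrow> nat \<Rightarrow> nat \<Rightarrow> real \<Rightarrow> op \<Rightarrow> complex" where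
  "omega n d L B X = mtr (confs n d L) (mmul (confs n d L) (P0 n d L B) X) / mtr (confs n d L) (P0 n d L B)"

definition Dtil :: "nat \<Rightarrow> nat \<Rightarrow> nat \<Rightarrow> real \<Rightarrow> op \<Rightarrow> complex" where
  "Dtil n d L B C = (let I = confs n d L in
     omega n d L B (mmul I (mmul I (mmul I C (Pex n d L B)) (Hinv n d L B)) (madj C))
   + omega n d L B (mmul I (mmul I (mmul I (madj C) (Pex n d L B)) (Hinv n d L B)) C))"

end

theory Submission
  imports Defs "HOL-Computational_Algebra.Fundamental_Theorem_Algebra" "HOL-Analysis.Convex" "HOL-Library.FuncSet"
begin

(*
  Diagonalise H in an orthonormal eigenbasis e_k with eigenvalues lam_k; the ground-state
  expectation omega(X) is then the average of <e_k, X e_k> over the ground levels k in G.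
  With c_kl, a_kl the matrix elements of C and A and h_l = lam_l - E_0, omega([C,A]) is the
  average over k in G of the sum over all l of c_kl a_lk - a_kl c_lk, and the terms with l in G
  cancel in pairs.  Writing each remaining term as (h_l^(-eps/2) c) (h_l^(eps/2) a), Cauchy-Schwarz
  bounds |omega([C,A])|^2 by (sum h^(-eps) |c|^2) times omega(A K^eps A') + omega(A' K^eps A),
  where K = H - E_0 and X' is the adjoint of X.  A second Cauchy-Schwarz with
  h^(-eps) = h^(-1/2) h^(1/2 - eps) bounds (sum h^(-eps) |c|^2)^2 by D(C) times
  sum h^(1 - 2 eps) |c|^2, and Young's inequality h^(1 - 2 eps) <= h + 2 eps bounds the latter
  by the double commutator plus 2 eps omega({C,C'}).  So kappa(eps) = 2 eps works.
  The eigenbasis exists because the orthogonal complement of finitely many eigenvectors is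
  again invariant under H, and an annihilating polynomial of a vector there has a root by the
  fundamental theorem of algebra.
*)

lemma exists_linear_dependence:
  fixes I :: "'a set" and J :: "'b set" and f :: "'b \<Rightarrow> 'a \<Rightarrow> 'c::field"
  assumes "finite I" "finite J" "card I < card J"
  shows "\<exists>c. (\<exists>j\<in>J. c j \<noteq> 0) \<and> (\<forall>\<sigma>\<in>I. (\<Sum>j\<in>J. c j * f j \<sigma>) = 0)"
  using assms
proof (induction I arbitrary: J f rule: finite_induct)
  case empty
  then have "J \<noteq> {}" by auto
  then show ?case by (rule_tac x="\<lambda>_. 1" in exI) auto
next
  case (insert a I)
  show ?case
  proof (cases "\<forall>j\<in>J. f j a = 0")
    case True
    from insert.IH[of J f] insert.prems insert.hyps obtain c where
      c: "\<exists>j\<in>J. c j \<noteq> 0" "\<forall>\<sigma>\<in>I. (\<Sum>j\<in>J. c j * f j \<sigma>) = 0" by auto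
    show ?thesis using c True by (rule_tac x=c in exI) auto
  next
    case False
    then obtain j0 where j0: "j0 \<in> J" "f j0 a \<noteq> 0" by auto
    define J' where "J' = J - {j0}"
    define f' where "f' = (\<lambda>j \<sigma>. f j \<sigma> - (f j a / f j0 a) * f j0 \<sigma>)"
    have cJ': "card I < card J'" using insert.prems insert.hyps j0 unfolding J'_def
      by (simp add: card_Diff_singleton)
    from insert.IH[of J' f'] cJ' insert.prems obtain c' where
      c': "\<exists>j\<in>J'. c' j \<noteq> 0" "\<forall>\<sigma>\<in>I. (\<Sum>j\<in>J'. c' j * f' j \<sigma>) = 0"
      unfolding J'_def by auto
    define c where "c = (\<lambda>j. if j = j0 then - (\<Sum>j\<in>J'. c' j * f j a) / f j0 a else c' j)"
    have key: "(\<Sum>j\<in>J. c j * f j \<sigma>) = (\<Sum>j\<in>J'. c' j * f' j \<sigma>)" for \<sigma>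
    proof -
      have "(\<Sum>j\<in>J. c j * f j \<sigma>) = c j0 * f j0 \<sigma> + (\<Sum>j\<in>J'. c j * f j \<sigma>)"
        unfolding J'_def using j0 insert.prems by (simp add: sum.remove)
      also have "(\<Sum>j\<in>J'. c j * f j \<sigma>) = (\<Sum>j\<in>J'. c' j * f j \<sigma>)"
        unfolding c_def J'_def by (rule sum.cong) auto
      also have "(\<Sum>j\<in>J'. c' j * f' j \<sigma>) = (\<Sum>j\<in>J'. c' j * f j \<sigma>) - (\<Sum>j\<in>J'. c' j * f j a) / f j0 a * f j0 \<sigma>"
        unfolding f'_def by (simp add: algebra_simps sum_subtractf sum_distrib_left sum_distrib_right sum_divide_distrib)
      ultimately show ?thesis unfolding c_def by simp
    qed
    show ?thesis
    proof (rule exI[of _ c], intro conjI ballI)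
      show "\<exists>j\<in>J. c j \<noteq> 0" using c' unfolding c_def J'_def by auto
    next
      fix \<sigma> assume "\<sigma> \<in> insert a I"
      then show "(\<Sum>j\<in>J. c j * f j \<sigma>) = 0"
      proof
        assume "\<sigma> = a"
        then show ?thesis unfolding key f'_def using j0 by simp
      next
        assume "\<sigma> \<in> I" then show ?thesis unfolding key using c' by simp
      qed
    qed
  qed
qed

definition mapp :: "conf set \<Rightarrow> op \<Rightarrow> (conf \<Rightarrow> complex) \<Rightarrow> conf \<Rightarrow> complex" where
  "mapp I H v = (\<lambda>\<sigma>. if \<sigma> \<in> I then mvec I H v \<sigma> else 0)"

definition vinner :: "conf set \<Rightarrow> (conf \<Rightarrow> complex) \<Rightarrow> (conf \<Rightarrow> complex) \<Rightarrow> complex" where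
  "vinner I u v = (\<Sum>\<sigma>\<in>I. cnj (u \<sigma>) * v \<sigma>)"

definition hermitian_on :: "conf set \<Rightarrow> op \<Rightarrow> bool" where
  "hermitian_on I H \<longleftrightarrow> (\<forall>\<sigma>\<in>I. \<forall>\<tau>\<in>I. H \<sigma> \<tau> = cnj (H \<tau> \<sigma>))"

definition vanishes_off :: "conf set \<Rightarrow> (conf \<Rightarrow> complex) \<Rightarrow> bool" where
  "vanishes_off I v \<longleftrightarrow> (\<forall>\<sigma>. \<sigma> \<notin> I \<longrightarrow> v \<sigma> = 0)"

definition poly_app :: "conf set \<Rightarrow> op \<Rightarrow> complex poly \<Rightarrow> (conf \<Rightarrow> complex) \<Rightarrow> conf \<Rightarrow> complex" where
  "poly_app I H p v = (\<lambda>\<sigma>. \<Sum>j\<le>degree p. coeff p j * (mapp I H ^^ j) v \<sigma>)"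

lemma mapp_sum:
  assumes "finite S"
  shows "mapp I H (\<lambda>\<sigma>. \<Sum>j\<in>S. c j * g j \<sigma>) = (\<lambda>\<sigma>. \<Sum>j\<in>S. c j * mapp I H (g j) \<sigma>)"
  unfolding mapp_def mvec_def
  by (auto simp: sum_distrib_left sum_distrib_right mult_ac intro!: ext sum.swap)

lemma mapp_scale: "mapp I H (\<lambda>\<sigma>. c * v \<sigma>) = (\<lambda>\<sigma>. c * mapp I H v \<sigma>)"
  unfolding mapp_def mvec_def by (auto simp: sum_distrib_left mult_ac intro!: ext)

lemma vanishes_off_mapp: "vanishes_off I (mapp I H v)" unfolding vanishes_off_def mapp_def by auto

lemma poly_app_degree_le:
  assumes "degree p \<le> D"
  shows "poly_app I H p v = (\<lambda>\<sigma>. \<Sum>j\<le>D. coeff p j * (mapp I H ^^ j) v \<sigma>)"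
  unfolding poly_app_def
proof (rule ext, rule sum.mono_neutral_left)
  fix \<sigma> show "\<forall>i\<in>{..D} - {..degree p}. coeff p i * (mapp I H ^^ i) v \<sigma> = 0"
    by (auto simp: coeff_eq_0)
qed (use assms in auto)

lemma poly_app_add: "poly_app I H (p + q) v = (\<lambda>\<sigma>. poly_app I H p v \<sigma> + poly_app I H q v \<sigma>)"
proof -
  define D where "D = max (degree p) (degree q)"
  have "degree (p + q) \<le> D" unfolding D_def by (rule degree_add_le) auto
  then show ?thesis
    by (simp add: poly_app_degree_le[of _ D] D_def sum.distrib distrib_right)
qed

lemma poly_app_smult: "poly_app I H (smult r q) v = (\<lambda>\<sigma>. r * poly_app I H q v \<sigma>)"
  by (simp add: poly_app_degree_le[of "smult r q" "degree q"] poly_app_def sum_distrib_left mult_ac)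

lemma poly_app_pCons_0: "poly_app I H (pCons 0 q) v = mapp I H (poly_app I H q v)"
proof -
  have "degree (pCons 0 q) \<le> Suc (degree q)" by (simp add: degree_pCons_le)
  then have "poly_app I H (pCons 0 q) v = (\<lambda>\<sigma>. \<Sum>j\<le>Suc (degree q). coeff (pCons 0 q) j * (mapp I H ^^ j) v \<sigma>)"
    by (rule poly_app_degree_le)
  also have "\<dots> = (\<lambda>\<sigma>. \<Sum>j\<le>degree q. coeff q j * (mapp I H ^^ Suc j) v \<sigma>)"
    by (simp only: sum.atMost_Suc_shift coeff_pCons_0 coeff_pCons_Suc) simp
  also have "\<dots> = mapp I H (poly_app I H q v)"
    unfolding poly_app_def by (subst mapp_sum) auto
  finally show ?thesis .
qed

lemma poly_app_linear_factor: "poly_app I H ([:-r, 1:] * q) v = (\<lambda>\<sigma>. mapp I H (poly_app I H q v) \<sigma> - r * poly_app I H q v \<sigma>)"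
proof -
  have e: "[:-r, 1:] * q = smult (-r) q + pCons 0 q" by simp
  show ?thesis by (simp only: e poly_app_add poly_app_smult poly_app_pCons_0) (simp add: algebra_simps)
qed

lemma poly_app_const: "poly_app I H [:a:] v = (\<lambda>\<sigma>. a * v \<sigma>)"
  unfolding poly_app_def by simp

section \<open>Existence of eigenvectors\<close>

locale invariant_subspace =
  fixes I :: "conf set" and H :: op and P :: "(conf \<Rightarrow> complex) \<Rightarrow> bool"
  assumes fin: "finite I"
    and closed_zero: "P (\<lambda>_. 0)" and closed_add: "\<And>u v. P u \<Longrightarrow> P v \<Longrightarrow> P (\<lambda>\<sigma>. u \<sigma> + v \<sigma>)"
    and closed_scale: "\<And>c v. P v \<Longrightarrow> P (\<lambda>\<sigma>. c * v \<sigma>)"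
    and closed_mapp: "\<And>v. P v \<Longrightarrow> P (mapp I H v)"
    and closed_vanishes: "\<And>v. P v \<Longrightarrow> vanishes_off I v"
begin

lemma closed_sum: "finite S \<Longrightarrow> (\<And>j. j \<in> S \<Longrightarrow> P (f j)) \<Longrightarrow> P (\<lambda>\<sigma>. \<Sum>j\<in>S. f j \<sigma>)"
proof (induction S rule: finite_induct)
  case empty then show ?case using closed_zero by simp
next
  case (insert x F) then show ?case using closed_add[of "f x" "\<lambda>\<sigma>. \<Sum>j\<in>F. f j \<sigma>"] by simp
qed

lemma closed_funpow: "P v \<Longrightarrow> P ((mapp I H ^^ j) v)"
  by (induction j) (auto simp: closed_mapp)

lemma closed_poly_app: "P v \<Longrightarrow> P (poly_app I H p v)"
  unfolding poly_app_def by (rule closed_sum) (auto intro: closed_scale closed_funpow)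

lemma eigenvector_of_annihilator:
  assumes "p \<noteq> 0" "poly_app I H p w = (\<lambda>_. 0)" "P w" "w \<noteq> (\<lambda>_. 0)"
  shows "\<exists>u r. P u \<and> u \<noteq> (\<lambda>_. 0) \<and> mapp I H u = (\<lambda>\<sigma>. r * u \<sigma>)"
  using assms
proof (induction "degree p" arbitrary: p rule: less_induct)
  case less
  show ?case
  proof (cases "degree p = 0")
    case True
    then obtain a where pa: "p = [:a:]" by (metis degree_eq_zeroE)
    then have "a \<noteq> 0" using less.prems by auto
    moreover have "(\<lambda>\<sigma>. a * w \<sigma>) = (\<lambda>_. 0)" using less.prems pa by (simp add: poly_app_const)
    ultimately have "w = (\<lambda>_. 0)" by (auto simp: fun_eq_iff)
    then show ?thesis using less.prems by simp
  next
    case False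
    then have "\<not> constant (poly p)" by (simp add: constant_degree)
    from fundamental_theorem_of_algebra[OF this] obtain r where "poly p r = 0" by blast
    then obtain q where pq: "p = [:-r, 1:] * q" using poly_eq_0_iff_dvd by (metis dvdE)
    then have q0: "q \<noteq> 0" using less.prems by auto
    have dq: "degree q < degree p" unfolding pq using q0 by (subst degree_mult_eq) auto
    define u where "u = poly_app I H q w"
    have Pu: "P u" unfolding u_def using less.prems by (simp add: closed_poly_app)
    have hu: "(\<lambda>\<sigma>. mapp I H u \<sigma> - r * u \<sigma>) = (\<lambda>_. 0)"
      using less.prems(2) unfolding pq poly_app_linear_factor u_def .
    show ?thesis
    proof (cases "u = (\<lambda>_. 0)")
      case True
      then show ?thesis using less.hyps[OF dq q0] less.prems unfolding u_def by blast
    next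
      case False
      have "mapp I H u = (\<lambda>\<sigma>. r * u \<sigma>)"
      proof
        fix \<sigma> show "mapp I H u \<sigma> = r * u \<sigma>" using fun_cong[OF hu, of \<sigma>] by simp
      qed
      then show ?thesis using Pu False by blast
    qed
  qed
qed

lemma eigenvector_exists:
  assumes "P w" "w \<noteq> (\<lambda>_. 0)"
  shows "\<exists>u r. P u \<and> u \<noteq> (\<lambda>_. 0) \<and> mapp I H u = (\<lambda>\<sigma>. r * u \<sigma>)"
proof -
  have "card I < card {..card I}" by simp
  from exists_linear_dependence[OF fin _ this, of "\<lambda>j. (mapp I H ^^ j) w"] obtain c where
    c: "\<exists>j\<in>{..card I}. c j \<noteq> 0" "\<forall>\<sigma>\<in>I. (\<Sum>j\<le>card I. c j * (mapp I H ^^ j) w \<sigma>) = 0" by auto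
  define p where "p = (\<Sum>j\<le>card I. monom (c j) j)"
  have cp: "coeff p j = (if j \<le> card I then c j else 0)" for j
    unfolding p_def by (simp add: coeff_sum)
  have dp: "degree p \<le> card I" by (rule degree_le) (auto simp: cp)
  have p0: "p \<noteq> 0"
  proof -
    obtain j where "j \<le> card I" "c j \<noteq> 0" using c(1) by auto
    then show ?thesis using cp[of j] by auto
  qed
  have "poly_app I H p w = (\<lambda>\<sigma>. \<Sum>j\<le>card I. c j * (mapp I H ^^ j) w \<sigma>)"
    by (simp add: poly_app_degree_le[OF dp] cp)
  also have "\<dots> = (\<lambda>_. 0)"
  proof
    fix \<sigma> show "(\<Sum>j\<le>card I. c j * (mapp I H ^^ j) w \<sigma>) = 0"
    proof (cases "\<sigma> \<in> I")
      case True then show ?thesis using c(2) by simp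
    next
      case False
      have "vanishes_off I ((mapp I H ^^ j) w)" for j using closed_funpow[OF assms(1)] closed_vanishes by blast
      then show ?thesis using False unfolding vanishes_off_def by simp
    qed
  qed
  finally show ?thesis using eigenvector_of_annihilator[OF p0 _ assms] by blast
qed

end

section \<open>The spectral theorem\<close>

lemma vinner_sum_right: "finite S \<Longrightarrow> vinner I u (\<lambda>\<sigma>. \<Sum>i\<in>S. c i * f i \<sigma>) = (\<Sum>i\<in>S. c i * vinner I u (f i))"
proof -
  have "vinner I u (\<lambda>\<sigma>. \<Sum>i\<in>S. c i * f i \<sigma>) = (\<Sum>\<sigma>\<in>I. \<Sum>i\<in>S. c i * (cnj (u \<sigma>) * f i \<sigma>))"
    unfolding vinner_def by (simp add: sum_distrib_left mult_ac)
  also have "\<dots> = (\<Sum>i\<in>S. \<Sum>\<sigma>\<in>I. c i * (cnj (u \<sigma>) * f i \<sigma>))" by (rule sum.swap)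
  also have "\<dots> = (\<Sum>i\<in>S. c i * vinner I u (f i))" unfolding vinner_def by (simp add: sum_distrib_left)
  finally show ?thesis .
qed

lemma vinner_add_right: "vinner I u (\<lambda>\<sigma>. v \<sigma> + w \<sigma>) = vinner I u v + vinner I u w"
  unfolding vinner_def by (simp add: distrib_left sum.distrib)

lemma vinner_diff_right: "vinner I u (\<lambda>\<sigma>. v \<sigma> - w \<sigma>) = vinner I u v - vinner I u w"
  unfolding vinner_def by (simp add: right_diff_distrib sum_subtractf)

lemma vinner_scale_right: "vinner I u (\<lambda>\<sigma>. c * v \<sigma>) = c * vinner I u v"
  unfolding vinner_def by (simp add: sum_distrib_left mult_ac)

lemma vinner_scale_left: "vinner I (\<lambda>\<sigma>. c * v \<sigma>) w = cnj c * vinner I v w"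
  unfolding vinner_def by (simp add: sum_distrib_left mult_ac)

lemma vinner_commute: "vinner I u v = cnj (vinner I v u)"
  unfolding vinner_def by (simp add: mult_ac)

lemma vinner_zero_right: "vinner I u (\<lambda>_. 0) = 0" unfolding vinner_def by simp

lemma vinner_mapp_hermitian:
  assumes "hermitian_on I H"
  shows "vinner I u (mapp I H v) = vinner I (mapp I H u) v"
proof -
  have "vinner I u (mapp I H v) = (\<Sum>\<sigma>\<in>I. \<Sum>\<tau>\<in>I. cnj (u \<sigma>) * H \<sigma> \<tau> * v \<tau>)"
    unfolding vinner_def mapp_def mvec_def by (simp add: sum_distrib_left mult_ac)
  also have "\<dots> = (\<Sum>\<tau>\<in>I. \<Sum>\<sigma>\<in>I. cnj (H \<tau> \<sigma>) * cnj (u \<sigma>) * v \<tau>)"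
  proof (subst sum.swap, intro sum.cong refl)
    fix \<tau> \<sigma> assume "\<tau> \<in> I" "\<sigma> \<in> I"
    then have "H \<sigma> \<tau> = cnj (H \<tau> \<sigma>)" using assms unfolding hermitian_on_def by blast
    then show "cnj (u \<sigma>) * H \<sigma> \<tau> * v \<tau> = cnj (H \<tau> \<sigma>) * cnj (u \<sigma>) * v \<tau>" by simp
  qed
  also have "\<dots> = vinner I (mapp I H u) v"
    unfolding vinner_def mapp_def mvec_def by (auto simp: sum_distrib_left sum_distrib_right mult_ac intro!: sum.cong)
  finally show ?thesis .
qed

lemma vinner_self: "vinner I u u = complex_of_real (\<Sum>\<sigma>\<in>I. (cmod (u \<sigma>))\<^sup>2)"
  unfolding vinner_def of_real_sum by (rule sum.cong) (simp_all only: complex_norm_square mult.commute)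

lemma sum_norm_square_pos:
  assumes "finite I" "vanishes_off I u" "u \<noteq> (\<lambda>_. 0)"
  shows "(\<Sum>\<sigma>\<in>I. (cmod (u \<sigma>))\<^sup>2) > 0"
proof -
  obtain \<sigma> where "u \<sigma> \<noteq> 0" using assms(3) by auto
  then have s: "\<sigma> \<in> I" using assms(2) unfolding vanishes_off_def by auto
  have "(cmod (u \<sigma>))\<^sup>2 > 0" using \<open>u \<sigma> \<noteq> 0\<close> by simp
  also have "(cmod (u \<sigma>))\<^sup>2 \<le> (\<Sum>\<sigma>\<in>I. (cmod (u \<sigma>))\<^sup>2)"
    by (rule member_le_sum) (use s assms(1) in auto)
  finally show ?thesis .
qed

lemma hermitian_eigenvalue_real:
  assumes "finite I" "hermitian_on I H" "vanishes_off I u" "u \<noteq> (\<lambda>_. 0)" "mapp I H u = (\<lambda>\<sigma>. r * u \<sigma>)"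
  shows "r = complex_of_real (Re r)"
proof -
  have "vinner I u (mapp I H u) = vinner I (mapp I H u) u" by (rule vinner_mapp_hermitian[OF assms(2)])
  then have "r * vinner I u u = cnj r * vinner I u u" unfolding assms(5) vinner_scale_left vinner_scale_right .
  moreover have "vinner I u u \<noteq> 0" unfolding vinner_self using sum_norm_square_pos[OF assms(1,3,4)] by (simp del: of_real_sum of_real_power)
  ultimately have "r = cnj r" by simp
  then have "Im r = Im (cnj r)" by (rule arg_cong)
  then have "Im r = 0" by simp
  then show ?thesis by (simp add: complex_eq_iff)
qed

definition orthonormal_eigen :: "conf set \<Rightarrow> op \<Rightarrow> nat \<Rightarrow> (nat \<Rightarrow> conf \<Rightarrow> complex) \<Rightarrow> (nat \<Rightarrow> real) \<Rightarrow> bool" where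
  "orthonormal_eigen I H k e lam \<longleftrightarrow> (\<forall>i<k. vanishes_off I (e i)) \<and>
     (\<forall>i<k. \<forall>j<k. vinner I (e i) (e j) = (if i = j then 1 else 0)) \<and>
     (\<forall>i<k. mapp I H (e i) = (\<lambda>\<sigma>. complex_of_real (lam i) * e i \<sigma>))"

definition spanning :: "conf set \<Rightarrow> nat \<Rightarrow> (nat \<Rightarrow> conf \<Rightarrow> complex) \<Rightarrow> bool" where
  "spanning I k e \<longleftrightarrow> (\<forall>v. vanishes_off I v \<longrightarrow> v = (\<lambda>\<sigma>. \<Sum>i<k. vinner I (e i) v * e i \<sigma>))"

lemma orthonormal_eigen_length_le:
  assumes "finite I" "orthonormal_eigen I H k e lam"
  shows "k \<le> card I"
proof (rule ccontr)
  assume "\<not> k \<le> card I"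
  then have "card I < card {..<k}" by simp
  from exists_linear_dependence[OF assms(1) _ this, of e] obtain c where
    c: "\<exists>j\<in>{..<k}. c j \<noteq> 0" "\<forall>\<sigma>\<in>I. (\<Sum>j<k. c j * e j \<sigma>) = 0" by auto
  have "c i = 0" if "i < k" for i
  proof -
    have "vinner I (e i) (\<lambda>\<sigma>. \<Sum>j<k. c j * e j \<sigma>) = (\<Sum>j<k. c j * vinner I (e i) (e j))"
      by (simp add: vinner_sum_right)
    also have "\<dots> = (\<Sum>j<k. if j = i then c j else 0)"
      using assms(2) that unfolding orthonormal_eigen_def by (intro sum.cong refl) auto
    also have "\<dots> = c i" using that by simp
    finally have "c i = vinner I (e i) (\<lambda>\<sigma>. \<Sum>j<k. c j * e j \<sigma>)" by simp
    also have "\<dots> = 0" unfolding vinner_def using c(2) by simp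
    finally show ?thesis .
  qed
  then show False using c(1) by auto
qed

lemma orthogonal_complement_invariant:
  assumes fin: "finite I" and hH: "hermitian_on I H" and F: "orthonormal_eigen I H k e lam"
  shows "invariant_subspace I H (\<lambda>x. vanishes_off I x \<and> (\<forall>i<k. vinner I (e i) x = 0))"
proof
  have eigen: "\<forall>i<k. mapp I H (e i) = (\<lambda>\<sigma>. complex_of_real (lam i) * e i \<sigma>)"
    using F unfolding orthonormal_eigen_def by auto
  show "finite I" by fact
  show "vanishes_off I (\<lambda>_. 0) \<and> (\<forall>i<k. vinner I (e i) (\<lambda>_. 0) = 0)"
    unfolding vanishes_off_def by (simp add: vinner_zero_right)
  show "vanishes_off I (\<lambda>\<sigma>. u \<sigma> + v \<sigma>) \<and> (\<forall>i<k. vinner I (e i) (\<lambda>\<sigma>. u \<sigma> + v \<sigma>) = 0)"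
    if "vanishes_off I u \<and> (\<forall>i<k. vinner I (e i) u = 0)"
      "vanishes_off I v \<and> (\<forall>i<k. vinner I (e i) v = 0)" for u v
    using that unfolding vanishes_off_def by (simp add: vinner_add_right)
  show "vanishes_off I (\<lambda>\<sigma>. c * v \<sigma>) \<and> (\<forall>i<k. vinner I (e i) (\<lambda>\<sigma>. c * v \<sigma>) = 0)"
    if "vanishes_off I v \<and> (\<forall>i<k. vinner I (e i) v = 0)" for c v
    using that unfolding vanishes_off_def by (simp add: vinner_scale_right)
  show "vanishes_off I (mapp I H v) \<and> (\<forall>i<k. vinner I (e i) (mapp I H v) = 0)"
    if "vanishes_off I v \<and> (\<forall>i<k. vinner I (e i) v = 0)" for v
    using that eigen vanishes_off_mapp unfolding vinner_mapp_hermitian[OF hH]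
    by (simp add: vinner_scale_left)
qed simp

lemma normalizable_eigenvector:
  assumes fin: "finite I" and hH: "hermitian_on I H"
    and u: "vanishes_off I u" "u \<noteq> (\<lambda>_. 0)" "mapp I H u = (\<lambda>\<sigma>. r * u \<sigma>)"
  shows "\<exists>a. vinner I (\<lambda>\<sigma>. a * u \<sigma>) (\<lambda>\<sigma>. a * u \<sigma>) = 1
    \<and> mapp I H (\<lambda>\<sigma>. a * u \<sigma>) = (\<lambda>\<sigma>. complex_of_real (Re r) * (a * u \<sigma>))"
proof -
  have rr: "complex_of_real (Re r) = r"
    using hermitian_eigenvalue_real[OF fin hH u] by simp
  define s where "s = (\<Sum>\<sigma>\<in>I. (cmod (u \<sigma>))\<^sup>2)"
  have s0: "s > 0" unfolding s_def by (rule sum_norm_square_pos[OF fin u(1,2)])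
  define a where "a = complex_of_real (1 / sqrt s)"
  have "vinner I (\<lambda>\<sigma>. a * u \<sigma>) (\<lambda>\<sigma>. a * u \<sigma>) = cnj a * a * vinner I u u"
    unfolding vinner_scale_left vinner_scale_right by simp
  also have "\<dots> = complex_of_real ((1 / sqrt s) * (1 / sqrt s) * s)"
    unfolding vinner_self a_def s_def[symmetric] by (simp only: of_real_mult complex_cnj_complex_of_real)
  also have "(1 / sqrt s) * (1 / sqrt s) * s = 1"
    using s0 by (simp add: field_simps flip: power2_eq_square)
  finally show ?thesis
    unfolding mapp_scale u(3) rr by (auto simp: mult_ac)
qed

lemma orthonormal_eigen_snoc:
  assumes F: "orthonormal_eigen I H k e lam"
    and u: "vanishes_off I u" "vinner I u u = 1" "\<And>i. i < k \<Longrightarrow> vinner I (e i) u = 0"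
      "mapp I H u = (\<lambda>\<sigma>. complex_of_real \<mu> * u \<sigma>)"
  shows "orthonormal_eigen I H (Suc k) (e(k := u)) (lam(k := \<mu>))"
  unfolding orthonormal_eigen_def
proof (intro conjI allI impI)
  have orthonormal: "\<forall>i<k. \<forall>j<k. vinner I (e i) (e j) = (if i = j then 1 else 0)"
    and eigen: "\<forall>i<k. mapp I H (e i) = (\<lambda>\<sigma>. complex_of_real (lam i) * e i \<sigma>)"
    and vanishes: "\<forall>i<k. vanishes_off I (e i)" using F unfolding orthonormal_eigen_def by auto
  fix i assume i: "i < Suc k"
  show "vanishes_off I ((e(k := u)) i)" using vanishes u(1) i by (cases "i = k") auto
  show "mapp I H ((e(k := u)) i) = (\<lambda>\<sigma>. complex_of_real ((lam(k := \<mu>)) i) * (e(k := u)) i \<sigma>)"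
    using eigen u(4) i by (cases "i = k") simp_all
  fix j assume j: "j < Suc k"
  show "vinner I ((e(k := u)) i) ((e(k := u)) j) = (if i = j then 1 else 0)"
  proof (cases "i = k"; cases "j = k")
    assume "i = k" "j \<noteq> k" then show ?thesis using u(3)[of j] j vinner_commute[of I u "e j"] by simp
  next
    assume "i \<noteq> k" "j = k" then show ?thesis using u(3)[of i] i by simp
  next
    assume "i \<noteq> k" "j \<noteq> k" then show ?thesis using orthonormal i j by simp
  qed (use u(2) in simp)
qed

lemma orthonormal_eigen_extend:
  assumes fin: "finite I" and hH: "hermitian_on I H" and F: "orthonormal_eigen I H k e lam"
    and incomplete: "\<not> spanning I k e"
  shows "\<exists>e' lam'. orthonormal_eigen I H (Suc k) e' lam'"
proof -
  define P where "P = (\<lambda>x. vanishes_off I x \<and> (\<forall>i<k. vinner I (e i) x = 0))"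
  interpret invariant_subspace I H P
    unfolding P_def by (rule orthogonal_complement_invariant[OF fin hH F])
  obtain v where v: "vanishes_off I v" "v \<noteq> (\<lambda>\<sigma>. \<Sum>i<k. vinner I (e i) v * e i \<sigma>)"
    using incomplete unfolding spanning_def by auto
  define w where "w = (\<lambda>\<sigma>. v \<sigma> - (\<Sum>i<k. vinner I (e i) v * e i \<sigma>))"
  have orthonormal: "\<forall>i<k. \<forall>j<k. vinner I (e i) (e j) = (if i = j then 1 else 0)"
    and vanishes: "\<forall>i<k. vanishes_off I (e i)" using F unfolding orthonormal_eigen_def by auto
  have "w \<noteq> (\<lambda>_. 0)" using v(2) unfolding w_def by (auto simp: fun_eq_iff)
  moreover have "P w"
  proof -
    have "vanishes_off I w" using v(1) vanishes unfolding w_def vanishes_off_def by auto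
    moreover have "vinner I (e j) w = 0" if "j < k" for j
    proof -
      have "vinner I (e j) w = vinner I (e j) v - (\<Sum>i<k. vinner I (e i) v * vinner I (e j) (e i))"
        unfolding w_def vinner_diff_right by (simp add: vinner_sum_right)
      also have "(\<Sum>i<k. vinner I (e i) v * vinner I (e j) (e i)) = (\<Sum>i<k. if i = j then vinner I (e i) v else 0)"
        using orthonormal that by (intro sum.cong refl) auto
      finally show ?thesis using that by simp
    qed
    ultimately show ?thesis unfolding P_def by auto
  qed
  ultimately obtain u r where u: "P u" "u \<noteq> (\<lambda>_. 0)" "mapp I H u = (\<lambda>\<sigma>. r * u \<sigma>)"
    using eigenvector_exists by blast
  have su: "vanishes_off I u" using u(1) unfolding P_def by auto
  obtain a where a: "vinner I (\<lambda>\<sigma>. a * u \<sigma>) (\<lambda>\<sigma>. a * u \<sigma>) = 1"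
    "mapp I H (\<lambda>\<sigma>. a * u \<sigma>) = (\<lambda>\<sigma>. complex_of_real (Re r) * (a * u \<sigma>))"
    using normalizable_eigenvector[OF fin hH su u(2,3)] by blast
  have "vanishes_off I (\<lambda>\<sigma>. a * u \<sigma>)" using su unfolding vanishes_off_def by simp
  moreover have "vinner I (e i) (\<lambda>\<sigma>. a * u \<sigma>) = 0" if "i < k" for i
    unfolding vinner_scale_right using u(1) that unfolding P_def by simp
  ultimately show ?thesis using orthonormal_eigen_snoc[OF F _ a(1) _ a(2)] by blast
qed

lemma hermitian_eigenbasis_exists:
  assumes fin: "finite I" and hH: "hermitian_on I H"
  shows "\<exists>m e lam. orthonormal_eigen I H m e lam \<and> spanning I m e"
proof -
  have "(\<exists>m e lam. orthonormal_eigen I H m e lam \<and> spanning I m e) \<or> (\<exists>e lam. orthonormal_eigen I H k e lam)" for k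
  proof (induction k)
    case 0 then show ?case unfolding orthonormal_eigen_def by auto
  next
    case (Suc k)
    then show ?case using orthonormal_eigen_extend[OF fin hH] by blast
  qed
  moreover have "\<not> orthonormal_eigen I H (Suc (card I)) e lam" for e lam
    using orthonormal_eigen_length_le[OF fin, of H "Suc (card I)" e lam] by linarith
  ultimately show ?thesis by blast
qed

section \<open>Functional calculus and matrix elements in an eigenbasis\<close>

definition spectral_op :: "conf set \<Rightarrow> nat \<Rightarrow> (nat \<Rightarrow> conf \<Rightarrow> complex) \<Rightarrow> (nat \<Rightarrow> real) \<Rightarrow> (real \<Rightarrow> real) \<Rightarrow> op" where
  "spectral_op I m e lam f = (\<lambda>\<sigma> \<tau>. if \<sigma> \<in> I \<and> \<tau> \<in> I then (\<Sum>i<m. complex_of_real (f (lam i)) * e i \<sigma> * cnj (e i \<tau>)) else 0)"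

definition mat_elem :: "conf set \<Rightarrow> (nat \<Rightarrow> conf \<Rightarrow> complex) \<Rightarrow> op \<Rightarrow> nat \<Rightarrow> nat \<Rightarrow> complex" where
  "mat_elem I e X j k = vinner I (e j) (mapp I X (e k))"

definition diagonal_in :: "conf set \<Rightarrow> nat \<Rightarrow> (nat \<Rightarrow> conf \<Rightarrow> complex) \<Rightarrow> op \<Rightarrow> (nat \<Rightarrow> complex) \<Rightarrow> bool" where
  "diagonal_in I m e D d \<longleftrightarrow> (\<forall>p q. p < m \<longrightarrow> q < m \<longrightarrow> mat_elem I e D p q = (if p = q then d q else 0))"

lemma vinner_mapp_madj: "vinner I u (mapp I (madj X) v) = vinner I (mapp I X u) v"
proof -
  have "vinner I u (mapp I (madj X) v) = (\<Sum>\<sigma>\<in>I. \<Sum>\<tau>\<in>I. cnj (u \<sigma>) * cnj (X \<tau> \<sigma>) * v \<tau>)"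
    unfolding vinner_def mapp_def mvec_def madj_def by (simp add: sum_distrib_left mult_ac)
  also have "\<dots> = (\<Sum>\<tau>\<in>I. \<Sum>\<sigma>\<in>I. cnj (u \<sigma>) * cnj (X \<tau> \<sigma>) * v \<tau>)" by (rule sum.swap)
  also have "\<dots> = vinner I (mapp I X u) v"
    unfolding vinner_def mapp_def mvec_def by (auto simp: sum_distrib_left sum_distrib_right mult_ac intro!: sum.cong)
  finally show ?thesis .
qed

lemma mapp_mmul: "mapp I (mmul I X Y) v = mapp I X (mapp I Y v)"
proof
  fix \<sigma>
  show "mapp I (mmul I X Y) v \<sigma> = mapp I X (mapp I Y v) \<sigma>"
  proof (cases "\<sigma> \<in> I")
    case True
    have "mapp I (mmul I X Y) v \<sigma> = (\<Sum>\<tau>\<in>I. \<Sum>\<rho>\<in>I. X \<sigma> \<rho> * Y \<rho> \<tau> * v \<tau>)"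
      using True unfolding mapp_def mvec_def mmul_def by (simp add: sum_distrib_right)
    also have "\<dots> = (\<Sum>\<rho>\<in>I. \<Sum>\<tau>\<in>I. X \<sigma> \<rho> * Y \<rho> \<tau> * v \<tau>)" by (rule sum.swap)
    also have "\<dots> = mapp I X (mapp I Y v) \<sigma>"
      using True unfolding mapp_def mvec_def by (auto simp: sum_distrib_left mult_ac intro!: sum.cong)
    finally show ?thesis .
  qed (simp add: mapp_def)
qed

lemma mapp_msub: "mapp I (msub X Y) v = (\<lambda>\<sigma>. mapp I X v \<sigma> - mapp I Y v \<sigma>)"
  unfolding mapp_def mvec_def msub_def by (auto simp: left_diff_distrib sum_subtractf)

lemma mapp_madd: "mapp I (madd X Y) v = (\<lambda>\<sigma>. mapp I X v \<sigma> + mapp I Y v \<sigma>)"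
  unfolding mapp_def mvec_def madd_def by (auto simp: distrib_right sum.distrib)

lemma mapp_mscale: "mapp I (mscale c X) v = (\<lambda>\<sigma>. c * mapp I X v \<sigma>)"
  unfolding mapp_def mvec_def mscale_def by (auto simp: sum_distrib_left mult_ac)

lemma mapp_mid: "finite I \<Longrightarrow> vanishes_off I v \<Longrightarrow> mapp I mid v = v"
  unfolding mapp_def mvec_def mid_def vanishes_off_def by (intro ext) (auto simp: if_distrib[of "\<lambda>x. x * _"] cong: if_cong)

lemma mat_elem_msub: "mat_elem I e (msub X Y) j k = mat_elem I e X j k - mat_elem I e Y j k"
  unfolding mat_elem_def mapp_msub vinner_diff_right ..

lemma mat_elem_madd: "mat_elem I e (madd X Y) j k = mat_elem I e X j k + mat_elem I e Y j k"
  unfolding mat_elem_def mapp_madd vinner_add_right ..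

lemma mat_elem_madj: "mat_elem I e (madj X) j k = cnj (mat_elem I e X k j)"
  unfolding mat_elem_def vinner_mapp_madj by (subst vinner_commute) simp

locale eigenbasis =
  fixes I :: "conf set" and H :: op and m :: nat and e :: "nat \<Rightarrow> conf \<Rightarrow> complex" and lam :: "nat \<Rightarrow> real"
  assumes fin: "finite I" and hH: "hermitian_on I H"
    and family: "orthonormal_eigen I H m e lam" and spans: "spanning I m e"
begin

lemma vanishes: "i < m \<Longrightarrow> vanishes_off I (e i)"
  using family unfolding orthonormal_eigen_def by auto

lemma orthonormal: "i < m \<Longrightarrow> j < m \<Longrightarrow> vinner I (e i) (e j) = (if i = j then 1 else 0)"
  using family unfolding orthonormal_eigen_def by auto

lemma eigen: "i < m \<Longrightarrow> mapp I H (e i) = (\<lambda>\<sigma>. complex_of_real (lam i) * e i \<sigma>)"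
  using family unfolding orthonormal_eigen_def by auto

lemma expand: "vanishes_off I v \<Longrightarrow> v = (\<lambda>\<sigma>. \<Sum>i<m. vinner I (e i) v * e i \<sigma>)"
  using spans unfolding spanning_def by auto

lemma completeness:
  assumes "\<sigma> \<in> I" "\<tau> \<in> I"
  shows "(\<Sum>i<m. e i \<sigma> * cnj (e i \<tau>)) = (if \<sigma> = \<tau> then 1 else 0)"
proof -
  define v where "v = (\<lambda>x. if x = \<tau> then (1::complex) else 0)"
  have "vanishes_off I v" unfolding v_def vanishes_off_def using assms by auto
  from fun_cong[OF expand[OF this], of \<sigma>]
  have "v \<sigma> = (\<Sum>i<m. vinner I (e i) v * e i \<sigma>)" .
  moreover have "vinner I (e i) v = cnj (e i \<tau>)" for i
    unfolding vinner_def v_def using fin assms by (simp add: if_distrib cong: if_cong)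
  ultimately show ?thesis unfolding v_def by (simp add: mult.commute)
qed

lemma eigvec_component:
  assumes "eigvec I H \<mu> v" "i < m"
  shows "vinner I (e i) v = 0 \<or> lam i = \<mu>"
proof -
  have sv: "vanishes_off I v" using assms(1) unfolding eigvec_def vanishes_off_def by auto
  have hv: "mapp I H v = (\<lambda>\<sigma>. complex_of_real \<mu> * v \<sigma>)"
    using assms(1) unfolding eigvec_def mapp_def by (auto simp: fun_eq_iff)
  have "complex_of_real \<mu> * vinner I (e i) v = vinner I (e i) (mapp I H v)" unfolding hv vinner_scale_right ..
  also have "\<dots> = vinner I (mapp I H (e i)) v" by (rule vinner_mapp_hermitian[OF hH])
  also have "\<dots> = complex_of_real (lam i) * vinner I (e i) v" unfolding eigen[OF assms(2)] vinner_scale_left by simp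
  finally show ?thesis by auto
qed

lemma eigvec_basis: "i < m \<Longrightarrow> eigvec I H (lam i) (e i)"
proof -
  assume i: "i < m"
  have "\<exists>\<sigma>\<in>I. e i \<sigma> \<noteq> 0"
  proof (rule ccontr)
    assume "\<not> ?thesis"
    then have "vinner I (e i) (e i) = 0" unfolding vinner_def by simp
    then show False using orthonormal[OF i i] by simp
  qed
  moreover have "mvec I H (e i) \<sigma> = complex_of_real (lam i) * e i \<sigma>" if "\<sigma> \<in> I" for \<sigma>
    using fun_cong[OF eigen[OF i], of \<sigma>] that unfolding mapp_def by simp
  ultimately show ?thesis using vanishes[OF i] unfolding eigvec_def vanishes_off_def by auto
qed

lemma spectral_op_eigvec:
  assumes "eigvec I H \<mu> v" "\<sigma> \<in> I"
  shows "mvec I (spectral_op I m e lam f) v \<sigma> = complex_of_real (f \<mu>) * v \<sigma>"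
proof -
  have sv: "vanishes_off I v" using assms(1) unfolding eigvec_def vanishes_off_def by auto
  have "mvec I (spectral_op I m e lam f) v \<sigma> = (\<Sum>\<tau>\<in>I. \<Sum>i<m. complex_of_real (f (lam i)) * e i \<sigma> * (cnj (e i \<tau>) * v \<tau>))"
    unfolding mvec_def spectral_op_def using assms(2) by (simp add: sum_distrib_right sum_distrib_left mult_ac)
  also have "\<dots> = (\<Sum>i<m. \<Sum>\<tau>\<in>I. complex_of_real (f (lam i)) * e i \<sigma> * (cnj (e i \<tau>) * v \<tau>))"
    by (rule sum.swap)
  also have "\<dots> = (\<Sum>i<m. complex_of_real (f (lam i)) * e i \<sigma> * vinner I (e i) v)"
    unfolding vinner_def by (simp add: sum_distrib_left)
  also have "\<dots> = (\<Sum>i<m. complex_of_real (f \<mu>) * (vinner I (e i) v * e i \<sigma>))"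
    by (rule sum.cong) (use eigvec_component[OF assms(1)] in auto)
  also have "\<dots> = complex_of_real (f \<mu>) * v \<sigma>"
    by (subst (2) expand[OF sv]) (simp add: sum_distrib_left)
  finally show ?thesis .
qed

text \<open>The definite description in fcalc is unique because an operator vanishing off I is determined
  by its action on the complete eigenbasis.\<close>
lemma fcalc_eq_spectral_op: "fcalc I H f = spectral_op I m e lam f"
  unfolding fcalc_def
proof (rule the_equality)
  show "(\<forall>\<sigma> \<tau>. \<sigma> \<notin> I \<or> \<tau> \<notin> I \<longrightarrow> spectral_op I m e lam f \<sigma> \<tau> = 0) \<and>
    (\<forall>\<mu> v. eigvec I H \<mu> v \<longrightarrow> (\<forall>\<sigma>\<in>I. mvec I (spectral_op I m e lam f) v \<sigma> = complex_of_real (f \<mu>) * v \<sigma>))"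
    using spectral_op_eigvec unfolding spectral_op_def by auto
next
  fix M assume M: "(\<forall>\<sigma> \<tau>. \<sigma> \<notin> I \<or> \<tau> \<notin> I \<longrightarrow> M \<sigma> \<tau> = 0) \<and>
    (\<forall>\<mu> v. eigvec I H \<mu> v \<longrightarrow> (\<forall>\<sigma>\<in>I. mvec I M v \<sigma> = complex_of_real (f \<mu>) * v \<sigma>))"
  show "M = spectral_op I m e lam f"
  proof (intro ext)
    fix \<sigma> \<tau>
    show "M \<sigma> \<tau> = spectral_op I m e lam f \<sigma> \<tau>"
    proof (cases "\<sigma> \<in> I \<and> \<tau> \<in> I")
      case True
      have "M \<sigma> \<tau> = (\<Sum>\<rho>\<in>I. M \<sigma> \<rho> * (if \<rho> = \<tau> then 1 else 0))"
        using True fin by (simp add: if_distrib cong: if_cong)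
      also have "\<dots> = (\<Sum>\<rho>\<in>I. \<Sum>i<m. M \<sigma> \<rho> * e i \<rho> * cnj (e i \<tau>))"
      proof (rule sum.cong[OF refl])
        fix \<rho> assume r: "\<rho> \<in> I"
        have "M \<sigma> \<rho> * (if \<rho> = \<tau> then 1 else 0) = M \<sigma> \<rho> * (\<Sum>i<m. e i \<rho> * cnj (e i \<tau>))"
          using completeness[OF r] True by simp
        then show "M \<sigma> \<rho> * (if \<rho> = \<tau> then 1 else 0) = (\<Sum>i<m. M \<sigma> \<rho> * e i \<rho> * cnj (e i \<tau>))"
          by (simp add: sum_distrib_left mult_ac)
      qed
      also have "\<dots> = (\<Sum>i<m. \<Sum>\<rho>\<in>I. M \<sigma> \<rho> * e i \<rho> * cnj (e i \<tau>))" by (rule sum.swap)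
      also have "\<dots> = (\<Sum>i<m. mvec I M (e i) \<sigma> * cnj (e i \<tau>))"
        unfolding mvec_def by (simp add: sum_distrib_right)
      also have "\<dots> = (\<Sum>i<m. complex_of_real (f (lam i)) * e i \<sigma> * cnj (e i \<tau>))"
        by (rule sum.cong) (use M eigvec_basis True in auto)
      finally show ?thesis unfolding spectral_op_def using True by simp
    next
      case False then show ?thesis using M unfolding spectral_op_def by auto
    qed
  qed
qed

lemma mat_elem_mmul: "mat_elem I e (mmul I X Y) j k = (\<Sum>l<m. mat_elem I e X j l * mat_elem I e Y l k)" if "k < m"
proof -
  have "mapp I Y (e k) = (\<lambda>\<sigma>. \<Sum>l<m. mat_elem I e Y l k * e l \<sigma>)"
    unfolding mat_elem_def by (rule expand[OF vanishes_off_mapp])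
  then have "mat_elem I e (mmul I X Y) j k = vinner I (e j) (mapp I X (\<lambda>\<sigma>. \<Sum>l<m. mat_elem I e Y l k * e l \<sigma>))"
    unfolding mat_elem_def mapp_mmul by simp
  also have "\<dots> = (\<Sum>l<m. mat_elem I e Y l k * mat_elem I e X j l)"
    unfolding mapp_sum[OF finite_lessThan] vinner_sum_right[OF finite_lessThan] mat_elem_def ..
  finally show ?thesis by (simp add: mult.commute)
qed

lemma mtr_eq_sum_mat_elem: "mtr I X = (\<Sum>k<m. mat_elem I e X k k)"
proof -
  have "(\<Sum>k<m. mat_elem I e X k k) = (\<Sum>k<m. \<Sum>\<sigma>\<in>I. \<Sum>\<tau>\<in>I. X \<sigma> \<tau> * (e k \<tau> * cnj (e k \<sigma>)))"
    unfolding mat_elem_def vinner_def mapp_def mvec_def by (auto simp: sum_distrib_left mult_ac intro!: sum.cong)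
  also have "\<dots> = (\<Sum>\<sigma>\<in>I. \<Sum>k<m. \<Sum>\<tau>\<in>I. X \<sigma> \<tau> * (e k \<tau> * cnj (e k \<sigma>)))" by (rule sum.swap)
  also have "\<dots> = (\<Sum>\<sigma>\<in>I. \<Sum>\<tau>\<in>I. \<Sum>k<m. X \<sigma> \<tau> * (e k \<tau> * cnj (e k \<sigma>)))" by (auto intro!: sum.cong sum.swap)
  also have "\<dots> = (\<Sum>\<sigma>\<in>I. \<Sum>\<tau>\<in>I. X \<sigma> \<tau> * (if \<tau> = \<sigma> then 1 else 0))"
    by (auto simp: completeness simp flip: sum_distrib_left intro!: sum.cong)
  also have "\<dots> = mtr I X" unfolding mtr_def using fin by (simp add: if_distrib cong: if_cong)
  finally show ?thesis by simp
qed

lemma mat_elem_eigen: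
  assumes "\<And>i. i < m \<Longrightarrow> mapp I M (e i) = (\<lambda>\<sigma>. c i * e i \<sigma>)" "j < m" "k < m"
  shows "mat_elem I e M j k = (if j = k then c k else 0)"
  unfolding mat_elem_def assms(1)[OF assms(3)] vinner_scale_right orthonormal[OF assms(2,3)] by simp

lemma mapp_spectral_op: "k < m \<Longrightarrow> mapp I (spectral_op I m e lam f) (e k) = (\<lambda>\<sigma>. complex_of_real (f (lam k)) * e k \<sigma>)"
  using spectral_op_eigvec[OF eigvec_basis] vanishes unfolding mapp_def vanishes_off_def by (auto simp: fun_eq_iff)

lemma mat_elem_spectral_op: "j < m \<Longrightarrow> k < m \<Longrightarrow> mat_elem I e (spectral_op I m e lam f) j k = (if j = k then complex_of_real (f (lam k)) else 0)"
  by (rule mat_elem_eigen[OF mapp_spectral_op])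

lemma mat_elem_H: "j < m \<Longrightarrow> k < m \<Longrightarrow> mat_elem I e H j k = (if j = k then complex_of_real (lam k) else 0)"
  by (rule mat_elem_eigen[OF eigen])

lemma mat_elem_mid: "j < m \<Longrightarrow> k < m \<Longrightarrow> mat_elem I e mid j k = (if j = k then 1 else 0)"
  using mat_elem_eigen[of mid "\<lambda>_. 1"] mapp_mid[OF fin vanishes] by simp

lemma spec_eq: "spec I H = lam ` {..<m}"
proof
  show "lam ` {..<m} \<subseteq> spec I H" unfolding spec_def using eigvec_basis by blast
next
  show "spec I H \<subseteq> lam ` {..<m}"
  proof
    fix \<mu> assume "\<mu> \<in> spec I H"
    then obtain v where v: "eigvec I H \<mu> v" unfolding spec_def by auto
    have sv: "vanishes_off I v" using v unfolding eigvec_def vanishes_off_def by auto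
    obtain \<sigma> where "v \<sigma> \<noteq> 0" using v unfolding eigvec_def by auto
    then obtain i where "i < m" "vinner I (e i) v \<noteq> 0"
      using fun_cong[OF expand[OF sv], of \<sigma>] by (metis (no_types, lifting) mult_eq_0_iff sum.neutral lessThan_iff)
    then show "\<mu> \<in> lam ` {..<m}" using eigvec_component[OF v] by auto
  qed
qed

lemma length_pos: "I \<noteq> {} \<Longrightarrow> m > 0"
proof (rule ccontr)
  assume "I \<noteq> {}" "\<not> m > 0"
  then obtain \<sigma> where "\<sigma> \<in> I" by auto
  from completeness[OF this this] \<open>\<not> m > 0\<close> show False by simp
qed

lemma mat_elem_mmul_diagonal_right:
  assumes "diagonal_in I m e D d" "k < m" "l < m"
  shows "mat_elem I e (mmul I X D) k l = mat_elem I e X k l * d l"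
proof -
  have "mat_elem I e (mmul I X D) k l = (\<Sum>p<m. mat_elem I e X k p * mat_elem I e D p l)" by (rule mat_elem_mmul[OF assms(3)])
  also have "\<dots> = (\<Sum>p<m. if p = l then mat_elem I e X k l * d l else 0)"
    by (rule sum.cong[OF refl]) (use assms in \<open>auto simp: diagonal_in_def\<close>)
  also have "\<dots> = mat_elem I e X k l * d l" using assms(3) by simp
  finally show ?thesis .
qed

lemma mat_elem_mmul_diagonal_left:
  assumes "diagonal_in I m e D d" "k < m" "l < m"
  shows "mat_elem I e (mmul I D X) k l = d k * mat_elem I e X k l"
proof -
  have "mat_elem I e (mmul I D X) k l = (\<Sum>p<m. mat_elem I e D k p * mat_elem I e X p l)" by (rule mat_elem_mmul[OF assms(3)])
  also have "\<dots> = (\<Sum>p<m. if p = k then d k * mat_elem I e X k l else 0)"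
    by (rule sum.cong[OF refl]) (use assms in \<open>auto simp: diagonal_in_def\<close>)
  also have "\<dots> = d k * mat_elem I e X k l" using assms(2) by simp
  finally show ?thesis .
qed

lemma mat_elem_sandwich:
  assumes "diagonal_in I m e D d" "k < m" "j < m"
  shows "mat_elem I e (mmul I (mmul I X D) Y) k j = (\<Sum>l<m. mat_elem I e X k l * d l * mat_elem I e Y l j)"
  unfolding mat_elem_mmul[OF assms(3)] by (rule sum.cong[OF refl]) (use mat_elem_mmul_diagonal_right[OF assms(1,2)] in simp)

lemma diagonal_spectral_op: "diagonal_in I m e (spectral_op I m e lam f) (\<lambda>q. complex_of_real (f (lam q)))"
  unfolding diagonal_in_def using mat_elem_spectral_op by auto

lemma diagonal_H: "diagonal_in I m e H (\<lambda>q. complex_of_real (lam q))"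
  unfolding diagonal_in_def using mat_elem_H by auto

lemma diagonal_mid: "diagonal_in I m e mid (\<lambda>q. 1)"
  unfolding diagonal_in_def using mat_elem_mid by auto

lemma diagonal_msub: "diagonal_in I m e X x \<Longrightarrow> diagonal_in I m e Y y \<Longrightarrow> diagonal_in I m e (msub X Y) (\<lambda>q. x q - y q)"
  unfolding diagonal_in_def mat_elem_msub by auto

lemma spectral_op_weighted_trace:
  "mtr I (mmul I (spectral_op I m e lam f) X) / mtr I (spectral_op I m e lam f)
    = (\<Sum>k<m. complex_of_real (f (lam k)) * mat_elem I e X k k) / (\<Sum>k<m. complex_of_real (f (lam k)))"
proof -
  have "mtr I (mmul I (spectral_op I m e lam f) X) = (\<Sum>k<m. complex_of_real (f (lam k)) * mat_elem I e X k k)"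
    unfolding mtr_eq_sum_mat_elem by (rule sum.cong[OF refl]) (use mat_elem_mmul_diagonal_left[OF diagonal_spectral_op] in simp)
  moreover have "mtr I (spectral_op I m e lam f) = (\<Sum>k<m. complex_of_real (f (lam k)))"
    unfolding mtr_eq_sum_mat_elem by (rule sum.cong[OF refl]) (use mat_elem_spectral_op in simp)
  ultimately show ?thesis by simp
qed

end

section \<open>A numerical inequality for sums over ground and excited levels\<close>

lemma two_term_cauchy_schwarz:
  fixes u1 u2 v1 v2 :: real
  shows "u1 * v1 + u2 * v2 \<le> sqrt (u1\<^sup>2 + u2\<^sup>2) * sqrt (v1\<^sup>2 + v2\<^sup>2)"
proof -
  have "(u1 * v1 + u2 * v2)\<^sup>2 \<le> (u1\<^sup>2 + u2\<^sup>2) * (v1\<^sup>2 + v2\<^sup>2)"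
  proof -
    have "(u1\<^sup>2 + u2\<^sup>2) * (v1\<^sup>2 + v2\<^sup>2) - (u1 * v1 + u2 * v2)\<^sup>2 = (u1 * v2 - u2 * v1)\<^sup>2"
      by (simp add: power2_eq_square algebra_simps)
    then show ?thesis by (metis diff_ge_0_iff_ge zero_le_power2)
  qed
  then have "u1 * v1 + u2 * v2 \<le> sqrt ((u1\<^sup>2 + u2\<^sup>2) * (v1\<^sup>2 + v2\<^sup>2))"
    using real_le_rsqrt by blast
  then show ?thesis by (simp add: real_sqrt_mult)
qed

lemma cauchy_schwarz_sqrt:
  fixes f g :: "'a \<Rightarrow> real"
  assumes "\<And>i. i \<in> S \<Longrightarrow> 0 \<le> f i" "\<And>i. i \<in> S \<Longrightarrow> 0 \<le> g i"
  shows "(\<Sum>i\<in>S. sqrt (f i) * sqrt (g i))\<^sup>2 \<le> (\<Sum>i\<in>S. f i) * (\<Sum>i\<in>S. g i)"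
proof -
  have "(\<Sum>i\<in>S. sqrt (f i) * sqrt (g i))\<^sup>2 \<le> (\<Sum>i\<in>S. (sqrt (f i))\<^sup>2) * (\<Sum>i\<in>S. (sqrt (g i))\<^sup>2)"
    by (rule Cauchy_Schwarz_ineq_sum)
  also have "\<dots> = (\<Sum>i\<in>S. f i) * (\<Sum>i\<in>S. g i)" using assms by simp
  finally show ?thesis .
qed

lemma powr_one_minus_le_add:
  fixes h \<epsilon> :: real
  assumes "h > 0" "0 < \<epsilon>" "\<epsilon> < 1/2"
  shows "h powr (1 - 2 * \<epsilon>) \<le> h + 2 * \<epsilon>"
proof -
  have "h powr (1 - 2 * \<epsilon>) * 1 powr (2 * \<epsilon>) \<le> (1 - 2 * \<epsilon>) * h + (2 * \<epsilon>) * 1"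
    by (rule Youngs_inequality_0) (use assms in auto)
  then have "h powr (1 - 2 * \<epsilon>) \<le> (1 - 2 * \<epsilon>) * h + 2 * \<epsilon>" by simp
  moreover have "(1 - 2 * \<epsilon>) * h \<le> h" using assms by (simp add: algebra_simps)
  ultimately show ?thesis by linarith
qed

lemma commutator_term_bound:
  fixes c1 c2 a1 a2 :: complex and h \<epsilon> :: real
  assumes "h > 0"
  shows "cmod (c1 * a1 - a2 * c2)
    \<le> sqrt (h powr (-\<epsilon>) * ((cmod c1)\<^sup>2 + (cmod c2)\<^sup>2)) * sqrt (h powr \<epsilon> * ((cmod a2)\<^sup>2 + (cmod a1)\<^sup>2))"
proof -
  define \<alpha> where "\<alpha> = h powr (-\<epsilon>/2)"
  define \<beta> where "\<beta> = h powr (\<epsilon>/2)"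
  have ab: "\<alpha> * \<beta> = 1" unfolding \<alpha>_def \<beta>_def using assms by (simp add: powr_add[symmetric])
  have a2: "\<alpha>\<^sup>2 = h powr (-\<epsilon>)"
    unfolding \<alpha>_def using assms by (simp add: powr_add[symmetric] power2_eq_square)
  have b2: "\<beta>\<^sup>2 = h powr \<epsilon>"
    unfolding \<beta>_def using assms by (simp add: powr_add[symmetric] power2_eq_square)
  have "cmod (c1 * a1 - a2 * c2) \<le> cmod c1 * cmod a1 + cmod a2 * cmod c2"
    by (metis norm_mult norm_triangle_ineq4)
  also have "\<dots> = (\<alpha> * cmod c1) * (\<beta> * cmod a1) + (\<alpha> * cmod c2) * (\<beta> * cmod a2)"
  proof -
    have ab': "(\<alpha> * x) * (\<beta> * y) = x * y" for x y :: real
      using ab by (metis mult.assoc mult.left_commute mult_1)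
    show ?thesis unfolding ab' by (simp add: mult.commute)
  qed
  also have "\<dots> \<le> sqrt ((\<alpha> * cmod c1)\<^sup>2 + (\<alpha> * cmod c2)\<^sup>2) * sqrt ((\<beta> * cmod a1)\<^sup>2 + (\<beta> * cmod a2)\<^sup>2)"
    by (rule two_term_cauchy_schwarz)
  also have "(\<alpha> * cmod c1)\<^sup>2 + (\<alpha> * cmod c2)\<^sup>2 = h powr (-\<epsilon>) * ((cmod c1)\<^sup>2 + (cmod c2)\<^sup>2)"
    using a2 by (simp add: power_mult_distrib algebra_simps)
  also have "(\<beta> * cmod a1)\<^sup>2 + (\<beta> * cmod a2)\<^sup>2 = h powr \<epsilon> * ((cmod a2)\<^sup>2 + (cmod a1)\<^sup>2)"
    using b2 by (simp add: power_mult_distrib algebra_simps)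
  finally show ?thesis .
qed

lemma sum_powr_weighted_square_le:
  fixes h w :: "'a \<Rightarrow> real" and \<epsilon> :: real
  assumes "\<And>p. p \<in> P \<Longrightarrow> h p > 0" "\<And>p. p \<in> P \<Longrightarrow> w p \<ge> 0"
  shows "(\<Sum>p\<in>P. h p powr (-\<epsilon>) * w p)\<^sup>2
    \<le> (\<Sum>p\<in>P. inverse (h p) * w p) * (\<Sum>p\<in>P. h p powr (1 - 2 * \<epsilon>) * w p)"
proof -
  have "h p powr (-\<epsilon>) * w p = sqrt (inverse (h p) * w p) * sqrt (h p powr (1 - 2 * \<epsilon>) * w p)"
    if "p \<in> P" for p
  proof -
    have hp: "h p > 0" "w p \<ge> 0" using assms that by auto
    have "inverse (h p) * h p powr (1 - 2 * \<epsilon>) = (h p powr (-\<epsilon>))\<^sup>2"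
      using hp by (simp add: powr_minus_divide powr_diff power2_eq_square powr_add[symmetric] field_simps)
    then have "(inverse (h p) * w p) * (h p powr (1 - 2 * \<epsilon>) * w p) = (h p powr (-\<epsilon>) * w p)\<^sup>2"
      by (simp add: power2_eq_square algebra_simps)
    then show ?thesis using hp by (simp add: real_sqrt_mult[symmetric])
  qed
  then have "(\<Sum>p\<in>P. h p powr (-\<epsilon>) * w p)
      = (\<Sum>p\<in>P. sqrt (inverse (h p) * w p) * sqrt (h p powr (1 - 2 * \<epsilon>) * w p))"
    by (rule sum.cong[OF refl])
  also have "(\<dots>)\<^sup>2 \<le> (\<Sum>p\<in>P. inverse (h p) * w p) * (\<Sum>p\<in>P. h p powr (1 - 2 * \<epsilon>) * w p)"
    by (rule cauchy_schwarz_sqrt) (auto intro!: mult_nonneg_nonneg simp: assms less_imp_le)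
  finally show ?thesis .
qed

lemma sum_commutator_ground_block:
  fixes c a :: "nat \<Rightarrow> nat \<Rightarrow> complex"
  assumes "finite U" "G \<subseteq> U"
  shows "(\<Sum>k\<in>G. \<Sum>l\<in>U. c k l * a l k - a k l * c l k)
    = (\<Sum>p\<in>G \<times> (U - G). c (fst p) (snd p) * a (snd p) (fst p) - a (fst p) (snd p) * c (snd p) (fst p))"
proof -
  define t where "t k l = c k l * a l k - a k l * c l k" for k l
  have fG: "finite G" using assms by (rule finite_subset[rotated])
  have ground: "(\<Sum>k\<in>G. \<Sum>l\<in>G. t k l) = 0"
  proof -
    have "(\<Sum>k\<in>G. \<Sum>l\<in>G. a k l * c l k) = (\<Sum>l\<in>G. \<Sum>k\<in>G. a k l * c l k)" by (rule sum.swap)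
    then show ?thesis unfolding t_def by (simp add: sum_subtractf mult.commute)
  qed
  have "(\<Sum>k\<in>G. \<Sum>l\<in>U. t k l) = (\<Sum>k\<in>G. (\<Sum>l\<in>G. t k l) + (\<Sum>l\<in>U - G. t k l))"
    using assms by (intro sum.cong refl) (simp add: sum.subset_diff add.commute)
  also have "\<dots> = (\<Sum>k\<in>G. \<Sum>l\<in>U - G. t k l)" using ground by (simp add: sum.distrib)
  also have "\<dots> = (\<Sum>p\<in>G \<times> (U - G). t (fst p) (snd p))"
    by (simp add: sum.cartesian_product case_prod_unfold)
  finally show ?thesis unfolding t_def .
qed

lemma sum_product_le_sum_sum:
  fixes f :: "nat \<Rightarrow> nat \<Rightarrow> real"
  assumes "finite U" "E \<subseteq> U" "\<And>k l. k \<in> G \<Longrightarrow> l \<in> U \<Longrightarrow> f k l \<ge> 0"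
  shows "(\<Sum>p\<in>G \<times> E. f (fst p) (snd p)) \<le> (\<Sum>k\<in>G. \<Sum>l\<in>U. f k l)"
proof -
  have "(\<Sum>p\<in>G \<times> E. f (fst p) (snd p)) = (\<Sum>k\<in>G. \<Sum>l\<in>E. f k l)"
    by (simp add: sum.cartesian_product case_prod_unfold)
  also have "\<dots> \<le> (\<Sum>k\<in>G. \<Sum>l\<in>U. f k l)"
    by (intro sum_mono sum_mono2) (use assms in auto)
  finally show ?thesis .
qed

lemma ground_commutator_sum_bound:
  fixes G U :: "nat set" and h :: "nat \<Rightarrow> real" and c a :: "nat \<Rightarrow> nat \<Rightarrow> complex" and \<epsilon> :: real
  assumes fU: "finite U" and GU: "G \<subseteq> U"
    and hG: "\<And>l. l \<in> G \<Longrightarrow> h l = 0" and hE: "\<And>l. l \<in> U - G \<Longrightarrow> h l > 0"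
    and eps: "0 < \<epsilon>" "\<epsilon> < 1/2"
  shows "(cmod (\<Sum>k\<in>G. \<Sum>l\<in>U. c k l * a l k - a k l * c l k))\<^sup>2
    \<le> sqrt (\<Sum>k\<in>G. \<Sum>l\<in>U. inverse (h l) * ((cmod (c k l))\<^sup>2 + (cmod (c l k))\<^sup>2))
      * sqrt (2 * \<epsilon> * (\<Sum>k\<in>G. \<Sum>l\<in>U. (cmod (c k l))\<^sup>2 + (cmod (c l k))\<^sup>2)
              + (\<Sum>k\<in>G. \<Sum>l\<in>U. h l * ((cmod (c k l))\<^sup>2 + (cmod (c l k))\<^sup>2)))
      * (\<Sum>k\<in>G. \<Sum>l\<in>U. h l powr \<epsilon> * ((cmod (a k l))\<^sup>2 + (cmod (a l k))\<^sup>2))"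
    (is "_ \<le> sqrt ?D * sqrt ?W * ?Y")
proof -
  define w where "w k l = (cmod (c k l))\<^sup>2 + (cmod (c l k))\<^sup>2" for k l
  define z where "z k l = (cmod (a k l))\<^sup>2 + (cmod (a l k))\<^sup>2" for k l
  define P where "P = G \<times> (U - G)"
  define f where "f p = h (snd p) powr (-\<epsilon>) * w (fst p) (snd p)" for p
  define g where "g p = h (snd p) powr \<epsilon> * z (fst p) (snd p)" for p
  have h0: "h l \<ge> 0" if "l \<in> U" for l using that hG hE by (cases "l \<in> G") (auto intro: less_imp_le)
  have hP: "h (snd p) > 0" if "p \<in> P" for p using that hE unfolding P_def by auto
  have w0: "w k l \<ge> 0" for k l unfolding w_def by simp
  have f0: "f p \<ge> 0" for p unfolding f_def using w0 by simp
  have g0: "g p \<ge> 0" for p unfolding g_def z_def by simp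
  have "(\<Sum>p\<in>P. f p)\<^sup>2
      \<le> (\<Sum>p\<in>P. inverse (h (snd p)) * w (fst p) (snd p))
        * (\<Sum>p\<in>P. h (snd p) powr (1 - 2 * \<epsilon>) * w (fst p) (snd p))"
    unfolding f_def by (rule sum_powr_weighted_square_le) (use hP w0 in auto)
  also have "\<dots> \<le> ?D * ?W"
  proof (rule mult_mono)
    show "(\<Sum>p\<in>P. inverse (h (snd p)) * w (fst p) (snd p)) \<le> ?D"
      unfolding P_def w_def by (rule sum_product_le_sum_sum) (use fU h0 in auto)
    have "(\<Sum>p\<in>P. h (snd p) powr (1 - 2 * \<epsilon>) * w (fst p) (snd p))
        \<le> (\<Sum>p\<in>P. (h (snd p) + 2 * \<epsilon>) * w (fst p) (snd p))"
      by (intro sum_mono mult_right_mono powr_one_minus_le_add) (use hP eps w0 in auto)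
    also have "\<dots> \<le> (\<Sum>k\<in>G. \<Sum>l\<in>U. (h l + 2 * \<epsilon>) * w k l)"
      unfolding P_def by (rule sum_product_le_sum_sum) (use fU h0 eps w0 in auto)
    also have "\<dots> = (\<Sum>k\<in>G. \<Sum>l\<in>U. h l * w k l) + (\<Sum>k\<in>G. \<Sum>l\<in>U. 2 * \<epsilon> * w k l)"
      by (simp only: distrib_right sum.distrib)
    also have "\<dots> = ?W" unfolding w_def sum_distrib_left[of "2 * \<epsilon>"] by (rule add.commute)
    finally show "(\<Sum>p\<in>P. h (snd p) powr (1 - 2 * \<epsilon>) * w (fst p) (snd p)) \<le> ?W" .
    show "0 \<le> ?D" using h0 by (intro sum_nonneg) auto
    show "0 \<le> (\<Sum>p\<in>P. h (snd p) powr (1 - 2 * \<epsilon>) * w (fst p) (snd p))"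
      using w0 by (intro sum_nonneg) auto
  qed
  finally have "(\<Sum>p\<in>P. f p) \<le> sqrt (?D * ?W)" by (rule real_le_rsqrt)
  then have f_bound: "(\<Sum>p\<in>P. f p) \<le> sqrt ?D * sqrt ?W" by (simp only: real_sqrt_mult)
  have "(cmod (\<Sum>k\<in>G. \<Sum>l\<in>U. c k l * a l k - a k l * c l k))\<^sup>2
      = (cmod (\<Sum>p\<in>P. c (fst p) (snd p) * a (snd p) (fst p) - a (fst p) (snd p) * c (snd p) (fst p)))\<^sup>2"
    unfolding P_def sum_commutator_ground_block[OF fU GU] ..
  also have "\<dots> \<le> (\<Sum>p\<in>P. sqrt (f p) * sqrt (g p))\<^sup>2"
  proof (rule power_mono[OF order_trans[OF norm_sum sum_mono]])
    show "cmod (c (fst p) (snd p) * a (snd p) (fst p) - a (fst p) (snd p) * c (snd p) (fst p))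
        \<le> sqrt (f p) * sqrt (g p)" if "p \<in> P" for p
      unfolding f_def g_def w_def z_def by (rule commutator_term_bound[OF hP[OF that]])
  qed simp
  also have "\<dots> \<le> (\<Sum>p\<in>P. f p) * (\<Sum>p\<in>P. g p)"
    by (rule cauchy_schwarz_sqrt) (use f0 g0 in auto)
  also have "\<dots> \<le> (sqrt ?D * sqrt ?W) * ?Y"
  proof (rule mult_mono'[OF f_bound])
    show "(\<Sum>p\<in>P. g p) \<le> ?Y"
      unfolding P_def g_def z_def by (rule sum_product_le_sum_sum) (use fU in auto)
  qed (use f0 g0 in \<open>simp_all add: sum_nonneg\<close>)
  finally show ?thesis .
qed

section \<open>Ground-state expectations of a Hermitian matrix\<close>

lemma mmul_assoc:
  assumes "finite I"
  shows "mmul I (mmul I X Y) Z = mmul I X (mmul I Y Z)"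
proof (intro ext)
  fix \<sigma> \<tau>
  have "mmul I (mmul I X Y) Z \<sigma> \<tau> = (\<Sum>\<rho>\<in>I. \<Sum>\<rho>'\<in>I. X \<sigma> \<rho>' * Y \<rho>' \<rho> * Z \<rho> \<tau>)"
    unfolding mmul_def by (simp add: sum_distrib_right)
  also have "\<dots> = (\<Sum>\<rho>'\<in>I. \<Sum>\<rho>\<in>I. X \<sigma> \<rho>' * Y \<rho>' \<rho> * Z \<rho> \<tau>)" by (rule sum.swap)
  also have "\<dots> = mmul I X (mmul I Y Z) \<sigma> \<tau>"
    unfolding mmul_def by (simp add: sum_distrib_left mult.assoc)
  finally show "mmul I (mmul I X Y) Z \<sigma> \<tau> = mmul I X (mmul I Y Z) \<sigma> \<tau>" .
qed

lemma Re_mult_real_cnj: "Re (z * complex_of_real r * cnj z) = r * (cmod z)\<^sup>2"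
proof -
  have "z * complex_of_real r * cnj z = complex_of_real r * (z * cnj z)" by (simp only: mult_ac)
  also have "\<dots> = complex_of_real (r * (cmod z)\<^sup>2)" by (simp only: complex_norm_square of_real_mult)
  finally show ?thesis by (simp only: Re_complex_of_real)
qed

lemma Re_cnj_mult_real: "Re (cnj z * complex_of_real r * z) = r * (cmod z)\<^sup>2"
  using Re_mult_real_cnj[of z r] by (simp add: mult_ac)

context eigenbasis
begin

lemma diagonal_mmul:
  assumes "diagonal_in I m e X x" "diagonal_in I m e Y y"
  shows "diagonal_in I m e (mmul I X Y) (\<lambda>q. x q * y q)"
  using assms(2) by (auto simp: mat_elem_mmul_diagonal_left[OF assms(1)] diagonal_in_def)

lemma Re_mat_elem_sandwich_madj:
  assumes "diagonal_in I m e D (\<lambda>q. complex_of_real (d q))" "k < m"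
  shows "Re (mat_elem I e (mmul I (mmul I X D) (madj X)) k k) = (\<Sum>l<m. d l * (cmod (mat_elem I e X k l))\<^sup>2)"
    and "Re (mat_elem I e (mmul I (mmul I (madj X) D) X) k k) = (\<Sum>l<m. d l * (cmod (mat_elem I e X l k))\<^sup>2)"
  unfolding mat_elem_sandwich[OF assms assms(2)] mat_elem_madj Re_sum Re_mult_real_cnj Re_cnj_mult_real
  by simp_all

lemma mat_elem_comm_diag:
  "k < m \<Longrightarrow> mat_elem I e (comm I C A) k k
    = (\<Sum>l<m. mat_elem I e C k l * mat_elem I e A l k - mat_elem I e A k l * mat_elem I e C l k)"
  unfolding comm_def mat_elem_msub mat_elem_mmul by (simp add: sum_subtractf)

lemma Re_mat_elem_acomm_madj:
  assumes "k < m"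
  shows "Re (mat_elem I e (acomm I C (madj C)) k k)
    = (\<Sum>l<m. (cmod (mat_elem I e C k l))\<^sup>2 + (cmod (mat_elem I e C l k))\<^sup>2)"
proof -
  have "mat_elem I e (acomm I C (madj C)) k k
      = (\<Sum>l<m. mat_elem I e C k l * complex_of_real 1 * cnj (mat_elem I e C k l))
      + (\<Sum>l<m. cnj (mat_elem I e C l k) * complex_of_real 1 * mat_elem I e C l k)"
    unfolding acomm_def mat_elem_madd mat_elem_mmul[OF assms] mat_elem_madj by simp
  then show ?thesis
    by (simp only: Re_sum Re_mult_real_cnj Re_cnj_mult_real plus_complex.sel sum.distrib) simp
qed

lemma Re_mat_elem_double_comm:
  assumes k: "k < m"
  shows "Re (mat_elem I e (comm I (comm I (madj C) H) C) k k)
    = (\<Sum>l<m. (lam l - lam k) * ((cmod (mat_elem I e C k l))\<^sup>2 + (cmod (mat_elem I e C l k))\<^sup>2))"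
proof -
  define c where "c = mat_elem I e C"
  have inner: "mat_elem I e (comm I (madj C) H) p q = cnj (c q p) * complex_of_real (lam q - lam p)"
    if "p < m" "q < m" for p q
    unfolding comm_def mat_elem_msub mat_elem_mmul_diagonal_right[OF diagonal_H that]
      mat_elem_mmul_diagonal_left[OF diagonal_H that] mat_elem_madj c_def
    by (simp add: algebra_simps)
  have "mat_elem I e (comm I (comm I (madj C) H) C) k k
      = (\<Sum>l<m. mat_elem I e (comm I (madj C) H) k l * c l k)
      - (\<Sum>l<m. c k l * mat_elem I e (comm I (madj C) H) l k)"
    unfolding comm_def[of I "comm I (madj C) H" C] mat_elem_msub mat_elem_mmul[OF k] c_def ..
  also have "(\<Sum>l<m. mat_elem I e (comm I (madj C) H) k l * c l k)
      = (\<Sum>l<m. cnj (c l k) * complex_of_real (lam l - lam k) * c l k)"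
    by (rule sum.cong[OF refl]) (simp add: inner k)
  also have "(\<Sum>l<m. c k l * mat_elem I e (comm I (madj C) H) l k)
      = - (\<Sum>l<m. c k l * complex_of_real (lam l - lam k) * cnj (c k l))"
    unfolding sum_negf[symmetric] by (rule sum.cong[OF refl]) (simp add: inner k algebra_simps)
  finally have "Re (mat_elem I e (comm I (comm I (madj C) H) C) k k)
      = (\<Sum>l<m. (lam l - lam k) * (cmod (c l k))\<^sup>2) + (\<Sum>l<m. (lam l - lam k) * (cmod (c k l))\<^sup>2)"
    by (simp only: diff_minus_eq_add Re_sum Re_mult_real_cnj Re_cnj_mult_real plus_complex.sel)
  then show ?thesis unfolding c_def distrib_left sum.distrib by linarith
qed

end

definition ground_proj :: "conf set \<Rightarrow> op \<Rightarrow> op" where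
  "ground_proj I H = fcalc I H (\<lambda>x. if x = Min (spec I H) then 1 else 0)"

definition shifted_ham :: "conf set \<Rightarrow> op \<Rightarrow> op" where
  "shifted_ham I H = msub H (mscale (complex_of_real (Min (spec I H))) mid)"

definition ground_expect :: "conf set \<Rightarrow> op \<Rightarrow> op \<Rightarrow> complex" where
  "ground_expect I H X = mtr I (mmul I (ground_proj I H) X) / mtr I (ground_proj I H)"

locale ground_eigenbasis = eigenbasis +
  assumes nonempty: "I \<noteq> {}"
begin

definition ground_energy :: real where
  "ground_energy = Min (lam ` {..<m})"

definition ground_levels :: "nat set" where
  "ground_levels = {k. k < m \<and> lam k = ground_energy}"

definition excitation :: "nat \<Rightarrow> real" where
  "excitation l = lam l - ground_energy"

lemma Min_spec: "Min (spec I H) = ground_energy"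
  unfolding ground_energy_def spec_eq ..

lemma ground_energy_le: "l < m \<Longrightarrow> ground_energy \<le> lam l"
  unfolding ground_energy_def by (intro Min_le) auto

lemma ground_level_less: "k \<in> ground_levels \<Longrightarrow> k < m"
  unfolding ground_levels_def by simp

lemma ground_levels_subset: "ground_levels \<subseteq> {..<m}"
  using ground_level_less by auto

lemma card_ground_levels_pos: "card ground_levels > 0"
proof -
  have "ground_energy \<in> lam ` {..<m}"
    unfolding ground_energy_def using length_pos[OF nonempty] by (intro Min_in) auto
  then have "ground_levels \<noteq> {}" unfolding ground_levels_def by auto
  then show ?thesis using ground_levels_subset by (simp add: card_gt_0_iff finite_subset)
qed

lemma excitation_ground: "l \<in> ground_levels \<Longrightarrow> excitation l = 0"
  unfolding ground_levels_def excitation_def by auto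

lemma excitation_pos: "l \<in> {..<m} - ground_levels \<Longrightarrow> excitation l > 0"
  using ground_energy_le unfolding ground_levels_def excitation_def by force

lemma ground_expect_eq:
  "ground_expect I H X = (\<Sum>k\<in>ground_levels. mat_elem I e X k k) / of_nat (card ground_levels)"
proof -
  define ind where "ind x = (if x = ground_energy then 1 else (0::real))" for x
  have ground_levels_eq: "ground_levels = {k \<in> {..<m}. lam k = ground_energy}"
    unfolding ground_levels_def by auto
  have "ground_proj I H = spectral_op I m e lam ind"
    unfolding ground_proj_def Min_spec ind_def by (rule fcalc_eq_spectral_op)
  then have "ground_expect I H X
      = (\<Sum>k<m. complex_of_real (ind (lam k)) * mat_elem I e X k k) / (\<Sum>k<m. complex_of_real (ind (lam k)))"
    unfolding ground_expect_def by (simp only: spectral_op_weighted_trace)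
  also have "(\<Sum>k<m. complex_of_real (ind (lam k)) * mat_elem I e X k k) = (\<Sum>k\<in>ground_levels. mat_elem I e X k k)"
  proof -
    have "(\<Sum>k\<in>ground_levels. mat_elem I e X k k) = (\<Sum>k<m. if lam k = ground_energy then mat_elem I e X k k else 0)"
      unfolding ground_levels_eq by (rule sum.inter_filter) simp
    also have "\<dots> = (\<Sum>k<m. complex_of_real (ind (lam k)) * mat_elem I e X k k)"
      by (rule sum.cong) (auto simp: ind_def)
    finally show ?thesis by simp
  qed
  also have "(\<Sum>k<m. complex_of_real (ind (lam k))) = of_nat (card ground_levels)"
  proof -
    have "of_nat (card ground_levels) = (\<Sum>k\<in>ground_levels. (1::complex))" by simp
    also have "\<dots> = (\<Sum>k<m. if lam k = ground_energy then 1 else 0)"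
      unfolding ground_levels_eq by (rule sum.inter_filter) simp
    also have "\<dots> = (\<Sum>k<m. complex_of_real (ind (lam k)))"
      by (rule sum.cong) (auto simp: ind_def)
    finally show ?thesis by simp
  qed
  finally show ?thesis .
qed

lemma Re_ground_expect:
  "Re (ground_expect I H X) = (\<Sum>k\<in>ground_levels. Re (mat_elem I e X k k)) / real (card ground_levels)"
  unfolding ground_expect_eq by simp

lemma shifted_eigenbasis: "eigenbasis I (shifted_ham I H) m e excitation"
proof (rule eigenbasis.intro[OF fin _ _ spans])
  show "hermitian_on I (shifted_ham I H)"
    unfolding hermitian_on_def
  proof (intro ballI)
    fix \<sigma> \<tau> assume "\<sigma> \<in> I" "\<tau> \<in> I"
    then have "H \<sigma> \<tau> = cnj (H \<tau> \<sigma>)" using hH unfolding hermitian_on_def by blast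
    then show "shifted_ham I H \<sigma> \<tau> = cnj (shifted_ham I H \<tau> \<sigma>)"
      unfolding shifted_ham_def msub_def mscale_def mid_def by auto
  qed
  show "orthonormal_eigen I (shifted_ham I H) m e excitation"
    unfolding orthonormal_eigen_def
  proof (intro conjI allI impI)
    fix i assume i: "i < m"
    show "vanishes_off I (e i)" by (rule vanishes[OF i])
    show "mapp I (shifted_ham I H) (e i) = (\<lambda>\<sigma>. complex_of_real (excitation i) * e i \<sigma>)"
      unfolding shifted_ham_def Min_spec mapp_msub mapp_mscale mapp_mid[OF fin vanishes[OF i]] eigen[OF i]
        excitation_def
      by (simp add: algebra_simps)
    fix j assume "j < m"
    then show "vinner I (e i) (e j) = (if i = j then 1 else 0)" using i by (rule orthonormal[rotated])
  qed
qed

lemma diagonal_shifted_fcalc: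
  "diagonal_in I m e (fcalc I (shifted_ham I H) f) (\<lambda>q. complex_of_real (f (excitation q)))"
proof -
  interpret shifted: eigenbasis I "shifted_ham I H" m e excitation by (rule shifted_eigenbasis)
  show ?thesis unfolding shifted.fcalc_eq_spectral_op by (rule shifted.diagonal_spectral_op)
qed

lemma diagonal_excited_resolvent:
  "diagonal_in I m e (mmul I (msub mid (ground_proj I H)) (fcalc I (shifted_ham I H) inverse))
     (\<lambda>q. complex_of_real (inverse (excitation q)))"
proof -
  have ground: "diagonal_in I m e (ground_proj I H) (\<lambda>q. complex_of_real (if lam q = ground_energy then 1 else 0))"
    unfolding ground_proj_def Min_spec fcalc_eq_spectral_op by (rule diagonal_spectral_op)
  have "(\<lambda>q. (1 - complex_of_real (if lam q = ground_energy then 1 else 0)) * complex_of_real (inverse (excitation q)))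
      = (\<lambda>q. complex_of_real (inverse (excitation q)))"
    by (auto simp: excitation_def)
  with diagonal_mmul[OF diagonal_msub[OF diagonal_mid ground] diagonal_shifted_fcalc[of inverse]]
  show ?thesis by (simp only:)
qed

end

lemma divide_card_bound:
  fixes T :: complex and D W Y :: real and N :: nat
  assumes "(cmod T)\<^sup>2 \<le> sqrt D * sqrt W * Y" "N > 0"
  shows "(cmod (T / of_nat N))\<^sup>2 \<le> sqrt (D / N) * sqrt (W / N) * (Y / N)"
proof -
  have "(cmod (T / of_nat N))\<^sup>2 = (cmod T)\<^sup>2 / (real N)\<^sup>2" by (simp add: norm_divide power_divide)
  also have "\<dots> \<le> sqrt D * sqrt W * Y / (real N)\<^sup>2" using assms(1) by (simp add: divide_right_mono)
  also have "\<dots> = sqrt (D / N) * sqrt (W / N) * (Y / N)"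
    using assms(2) by (simp add: real_sqrt_divide power2_eq_square field_simps)
  finally show ?thesis .
qed

context ground_eigenbasis
begin

lemma ground_expect_comm:
  "ground_expect I H (comm I C A)
    = (\<Sum>k\<in>ground_levels. \<Sum>l<m. mat_elem I e C k l * mat_elem I e A l k - mat_elem I e A k l * mat_elem I e C l k)
      / of_nat (card ground_levels)"
  unfolding ground_expect_eq by (simp add: ground_level_less mat_elem_comm_diag)

lemma Re_ground_expect_resolvent:
  defines "Pexc \<equiv> msub mid (ground_proj I H)" and "R \<equiv> fcalc I (shifted_ham I H) inverse"
  shows "Re (ground_expect I H (mmul I (mmul I (mmul I C Pexc) R) (madj C))
        + ground_expect I H (mmul I (mmul I (mmul I (madj C) Pexc) R) C))
    = (\<Sum>k\<in>ground_levels. \<Sum>l<m. inverse (excitation l)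
        * ((cmod (mat_elem I e C k l))\<^sup>2 + (cmod (mat_elem I e C l k))\<^sup>2)) / real (card ground_levels)"
proof -
  have "diagonal_in I m e (mmul I Pexc R) (\<lambda>q. complex_of_real (inverse (excitation q)))"
    unfolding Pexc_def R_def by (rule diagonal_excited_resolvent)
  note sandwich = Re_mat_elem_sandwich_madj[OF this]
  show ?thesis
    unfolding plus_complex.sel Re_ground_expect mmul_assoc[OF fin, of _ Pexc R]
    by (simp add: ground_level_less sandwich add_divide_distrib sum.distrib distrib_left)
qed

lemma Re_ground_expect_acomm_double_comm:
  "t * Re (ground_expect I H (acomm I C (madj C))) + Re (ground_expect I H (comm I (comm I (madj C) H) C))
    = (t * (\<Sum>k\<in>ground_levels. \<Sum>l<m. (cmod (mat_elem I e C k l))\<^sup>2 + (cmod (mat_elem I e C l k))\<^sup>2)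
       + (\<Sum>k\<in>ground_levels. \<Sum>l<m. excitation l * ((cmod (mat_elem I e C k l))\<^sup>2 + (cmod (mat_elem I e C l k))\<^sup>2)))
      / real (card ground_levels)"
proof -
  have "lam l - lam k = excitation l" if "k \<in> ground_levels" for k l
    using that unfolding ground_levels_def excitation_def by simp
  then show ?thesis
    unfolding Re_ground_expect
    by (simp add: ground_level_less Re_mat_elem_acomm_madj Re_mat_elem_double_comm add_divide_distrib)
qed

lemma Re_ground_expect_powr_sandwich:
  fixes \<epsilon> :: real
  defines "K \<equiv> fcalc I (shifted_ham I H) (\<lambda>x. x powr \<epsilon>)"
  shows "Re (ground_expect I H (mmul I (mmul I A K) (madj A))) + Re (ground_expect I H (mmul I (mmul I (madj A) K) A))
    = (\<Sum>k\<in>ground_levels. \<Sum>l<m. excitation l powr \<epsilon>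
        * ((cmod (mat_elem I e A k l))\<^sup>2 + (cmod (mat_elem I e A l k))\<^sup>2)) / real (card ground_levels)"
  unfolding Re_ground_expect K_def
  by (simp add: ground_level_less Re_mat_elem_sandwich_madj[OF diagonal_shifted_fcalc] add_divide_distrib
      sum.distrib distrib_left)

lemma ground_commutator_bound:
  assumes eps: "0 < \<epsilon>" "\<epsilon> < 1/2"
  defines "\<omega> \<equiv> ground_expect I H" and "Pexc \<equiv> msub mid (ground_proj I H)"
    and "R \<equiv> fcalc I (shifted_ham I H) inverse" and "K \<equiv> fcalc I (shifted_ham I H) (\<lambda>x. x powr \<epsilon>)"
  shows "(cmod (\<omega> (comm I C A)))\<^sup>2
    \<le> sqrt (Re (\<omega> (mmul I (mmul I (mmul I C Pexc) R) (madj C)) + \<omega> (mmul I (mmul I (mmul I (madj C) Pexc) R) C)))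
      * sqrt (2 * \<epsilon> * Re (\<omega> (acomm I C (madj C))) + Re (\<omega> (comm I (comm I (madj C) H) C)))
      * (Re (\<omega> (mmul I (mmul I A K) (madj A))) + Re (\<omega> (mmul I (mmul I (madj A) K) A)))"
  unfolding \<omega>_def Pexc_def R_def K_def Re_ground_expect_resolvent Re_ground_expect_acomm_double_comm
    Re_ground_expect_powr_sandwich
  unfolding ground_expect_comm
  by (rule divide_card_bound[OF ground_commutator_sum_bound[OF finite_lessThan ground_levels_subset
        excitation_ground excitation_pos eps] card_ground_levels_pos])

end

theorem hermitian_ground_commutator_bound:
  assumes fin: "finite I" and nonempty: "I \<noteq> {}" and hH: "hermitian_on I H"
    and eps: "0 < \<epsilon>" "\<epsilon> < 1/2"
  defines "\<omega> \<equiv> ground_expect I H" and "Pexc \<equiv> msub mid (ground_proj I H)"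
    and "R \<equiv> fcalc I (shifted_ham I H) inverse" and "K \<equiv> fcalc I (shifted_ham I H) (\<lambda>x. x powr \<epsilon>)"
  shows "(cmod (\<omega> (comm I C A)))\<^sup>2
    \<le> sqrt (Re (\<omega> (mmul I (mmul I (mmul I C Pexc) R) (madj C)) + \<omega> (mmul I (mmul I (mmul I (madj C) Pexc) R) C)))
      * sqrt (2 * \<epsilon> * Re (\<omega> (acomm I C (madj C))) + Re (\<omega> (comm I (comm I (madj C) H) C)))
      * (Re (\<omega> (mmul I (mmul I A K) (madj A))) + Re (\<omega> (mmul I (mmul I (madj A) K) A)))"
proof -
  obtain m e lam where "orthonormal_eigen I H m e lam" "spanning I m e"
    using hermitian_eigenbasis_exists[OF fin hH] by blast
  then interpret ground_eigenbasis I H m e lam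
    using fin nonempty hH by (intro ground_eigenbasis.intro eigenbasis.intro ground_eigenbasis_axioms.intro)
  show ?thesis
    unfolding \<omega>_def Pexc_def R_def K_def by (rule ground_commutator_bound[OF eps])
qed

section \<open>The Heisenberg antiferromagnet\<close>

lemma spin_hermitian: "spin n a k l = cnj (spin n a l k)"
proof -
  consider "a = 1" | "a = 2" | "a \<noteq> 1 \<and> a \<noteq> 2" by blast
  then show ?thesis
  proof cases
    case 1 then show ?thesis unfolding spin_def spM_def by (simp add: complex_cnj_divide add.commute)
  next
    case 2
    have c: "cnj (2 * \<i>) = - (2 * \<i>)" by simp
    have "(x - y) / (2 * \<i>) = (y - x) / (- (2 * \<i>))" for x y :: complex
      by (metis divide_minus_right minus_diff_eq minus_divide_left)
    then show ?thesis using 2 unfolding spin_def spM_def complex_cnj_divide complex_cnj_diff c by simp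
  next
    case 3 then show ?thesis unfolding spin_def by auto
  qed
qed

lemma op_at_hermitian:
  assumes "\<And>k l. M k l = cnj (M l k)"
  shows "op_at x M \<sigma> \<tau> = cnj (op_at x M \<tau> \<sigma>)"
proof (cases "\<forall>z. z \<noteq> x \<longrightarrow> \<sigma> z = \<tau> z")
  case True
  then have T2: "\<forall>z. z \<noteq> x \<longrightarrow> \<tau> z = \<sigma> z" by auto
  have "op_at x M \<sigma> \<tau> = M (\<sigma> x) (\<tau> x)" unfolding op_at_def by (rule if_P[OF True])
  moreover have "op_at x M \<tau> \<sigma> = M (\<tau> x) (\<sigma> x)" unfolding op_at_def by (rule if_P[OF T2])
  ultimately show ?thesis using assms[of "\<sigma> x" "\<tau> x"] by simp
next
  case False
  then have F2: "\<not> (\<forall>z. z \<noteq> x \<longrightarrow> \<tau> z = \<sigma> z)" by auto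
  have "op_at x M \<sigma> \<tau> = 0" unfolding op_at_def by (rule if_not_P[OF False])
  moreover have "op_at x M \<tau> \<sigma> = 0" unfolding op_at_def by (rule if_not_P[OF F2])
  ultimately show ?thesis by simp
qed

lemma cnj_mmul_hermitian:
  assumes "\<And>\<sigma> \<tau>. X \<sigma> \<tau> = cnj (X \<tau> \<sigma>)" "\<And>\<sigma> \<tau>. Y \<sigma> \<tau> = cnj (Y \<tau> \<sigma>)"
  shows "cnj (mmul I X Y \<tau> \<sigma>) = mmul I Y X \<sigma> \<tau>"
  unfolding mmul_def cnj_sum
proof (rule sum.cong[OF refl])
  fix \<rho> show "cnj (X \<tau> \<rho> * Y \<rho> \<sigma>) = Y \<sigma> \<rho> * X \<rho> \<tau>"
    using assms(1)[of \<rho> \<tau>] assms(2)[of \<sigma> \<rho>] by (simp add: mult.commute)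
qed

lemma mod_unit_step_uminus:
  fixes a M :: int
  assumes "M \<ge> 0"
  shows "(a mod M = 1 \<or> a mod M = M - 1) \<longleftrightarrow> ((- a) mod M = 1 \<or> (- a) mod M = M - 1)"
proof (cases "M = 0")
  case True then show ?thesis by auto
next
  case False
  then have M: "M > 0" using assms by simp
  have "(- a) mod M = (if a mod M = 0 then 0 else M - a mod M)" using M by (simp add: zmod_zminus1_eq_if)
  then show ?thesis using M by auto
qed

lemma nn_sym: "nn d L x y = nn d L y x"
proof -
  define Q where "Q = (\<lambda>a::int. a mod (2 * int L) = 1 \<or> a mod (2 * int L) = 2 * int L - 1)"
  have nq: "nn d L u v \<longleftrightarrow> u \<in> box d L \<and> v \<in> box d L \<and>
     (\<exists>i<d. Q (u ! i - v ! i) \<and> (\<forall>j<d. j \<noteq> i \<longrightarrow> u ! j = v ! j))" for u v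
    unfolding nn_def Q_def ..
  have QQ: "Q (x ! i - y ! i) = Q (y ! i - x ! i)" for i
    using mod_unit_step_uminus[of "2 * int L" "y ! i - x ! i"] unfolding Q_def by simp
  show ?thesis unfolding nq using QQ by auto
qed

lemma sum_swap_pairs:
  assumes "\<And>x y. R x y = R y x"
  shows "(\<Sum>p\<in>{(x, y). R x y}. f (snd p) (fst p)) = (\<Sum>p\<in>{(x, y). R x y}. f (fst p) (snd p))"
  by (rule sum.reindex_bij_witness[of _ prod.swap prod.swap]) (use assms in auto)

lemma Hp_apply: "Hp n d L B \<sigma> \<tau> = (1/2) * (\<Sum>p\<in>{(x,y). nn d L x y}. \<Sum>a\<in>{1,2,3::nat}.
                 mmul (confs n d L) (op_at (fst p) (spin n a)) (op_at (snd p) (spin n a)) \<sigma> \<tau>)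
            - complex_of_real B * (\<Sum>x\<in>box d L. (-1) ^ nat (\<bar>sum_list x\<bar>) * op_at x (spin n 3) \<sigma> \<tau>)"
  unfolding Hp_def Let_def by (simp add: case_prod_unfold)

lemma hermitian_Hp: "hermitian_on (confs n d L) (Hp n d L B)"
  unfolding hermitian_on_def
proof (intro ballI)
  fix \<sigma> \<tau>
  define I where "I = confs n d L"
  have sh: "\<And>a k l. spin n a k l = cnj (spin n a l k)" by (rule spin_hermitian)
  have oh: "\<And>x a \<sigma> \<tau>. op_at x (spin n a) \<sigma> \<tau> = cnj (op_at x (spin n a) \<tau> \<sigma>)"
    by (rule op_at_hermitian) (rule sh)
  have A: "cnj (\<Sum>p\<in>{(x,y). nn d L x y}. \<Sum>a\<in>{1,2,3::nat}. mmul I (op_at (fst p) (spin n a)) (op_at (snd p) (spin n a)) \<tau> \<sigma>)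
      = (\<Sum>p\<in>{(x,y). nn d L x y}. \<Sum>a\<in>{1,2,3::nat}. mmul I (op_at (fst p) (spin n a)) (op_at (snd p) (spin n a)) \<sigma> \<tau>)"
  proof -
    have "cnj (\<Sum>p\<in>{(x,y). nn d L x y}. \<Sum>a\<in>{1,2,3::nat}. mmul I (op_at (fst p) (spin n a)) (op_at (snd p) (spin n a)) \<tau> \<sigma>)
      = (\<Sum>p\<in>{(x,y). nn d L x y}. \<Sum>a\<in>{1,2,3::nat}. mmul I (op_at (snd p) (spin n a)) (op_at (fst p) (spin n a)) \<sigma> \<tau>)"
      unfolding cnj_sum by (intro sum.cong refl) (rule cnj_mmul_hermitian; rule oh)
    also have "\<dots> = (\<Sum>p\<in>{(x,y). nn d L x y}. \<Sum>a\<in>{1,2,3::nat}. mmul I (op_at (fst p) (spin n a)) (op_at (snd p) (spin n a)) \<sigma> \<tau>)"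
    proof -
      define F where "F = (\<lambda>x y. \<Sum>a\<in>{1,2,3::nat}. mmul I (op_at x (spin n a)) (op_at y (spin n a)) \<sigma> \<tau>)"
      show ?thesis using sum_swap_pairs[of "nn d L" F, OF nn_sym] unfolding F_def by simp
    qed
    finally show ?thesis .
  qed
  have Bt: "cnj (\<Sum>x\<in>box d L. (-1) ^ nat (\<bar>sum_list x\<bar>) * op_at x (spin n 3) \<tau> \<sigma>)
     = (\<Sum>x\<in>box d L. (-1) ^ nat (\<bar>sum_list x\<bar>) * op_at x (spin n 3) \<sigma> \<tau>)"
    unfolding cnj_sum by (rule sum.cong) (auto simp: oh[of _ 3 \<sigma> \<tau>])
  show "Hp n d L B \<sigma> \<tau> = cnj (Hp n d L B \<tau> \<sigma>)"
    unfolding Hp_apply I_def[symmetric] using A Bt by simp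
qed

lemma finite_box: "finite (box d L)"
proof -
  have "box d L \<subseteq> {xs. set xs \<subseteq> {- int L + 1..int L} \<and> length xs = d}"
    unfolding box_def by (auto simp: in_set_conv_nth)
  then show ?thesis by (rule finite_subset) (simp add: finite_lists_length_eq)
qed

lemma finite_confs: "finite (confs n d L)"
proof -
  have "confs n d L \<subseteq> (\<lambda>f x. if x \<in> box d L then f x else 0) ` (PiE (box d L) (\<lambda>_. {0..n}))"
  proof
    fix \<sigma> assume s: "\<sigma> \<in> confs n d L"
    have "restrict \<sigma> (box d L) \<in> PiE (box d L) (\<lambda>_. {0..n})" using s unfolding confs_def by auto
    moreover have "\<sigma> = (\<lambda>x. if x \<in> box d L then restrict \<sigma> (box d L) x else 0)"
      using s unfolding confs_def by auto
    ultimately show "\<sigma> \<in> (\<lambda>f x. if x \<in> box d L then f x else 0) ` (PiE (box d L) (\<lambda>_. {0..n}))" by blast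
  qed
  then show ?thesis by (rule finite_subset) (simp add: finite_box finite_PiE)
qed

lemma confs_nonempty: "confs n d L \<noteq> {}"
proof -
  have "(\<lambda>_. 0) \<in> confs n d L" unfolding confs_def by auto
  then show ?thesis by blast
qed

lemma omega_eq_ground_expect: "omega n d L B = ground_expect (confs n d L) (Hp n d L B)"
  unfolding omega_def ground_expect_def P0_def E0_def ground_proj_def ..

lemma Pex_eq: "Pex n d L B = msub mid (ground_proj (confs n d L) (Hp n d L B))"
  unfolding Pex_def P0_def E0_def ground_proj_def ..

lemma Hcal_eq_shifted_ham: "Hcal n d L B = shifted_ham (confs n d L) (Hp n d L B)"
  unfolding Hcal_def E0_def shifted_ham_def ..

theorem lemma5p1:
  fixes n d :: nat
  assumes "n \<ge> 1" and "d \<ge> 1"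
  shows "\<exists>\<epsilon>0 > 0. \<exists>\<kappa> :: real \<Rightarrow> real.
     (\<forall>\<epsilon>\<in>{0<..<\<epsilon>0}. \<kappa> \<epsilon> > 0) \<and> (\<kappa> \<longlongrightarrow> 0) (at_right 0) \<and>
     (\<forall>\<epsilon>\<in>{0<..<\<epsilon>0}. \<forall>L::nat. L \<ge> 1 \<longrightarrow> (\<forall>B::real. \<forall>A C :: op.
        (let I = confs n d L; \<omega> = omega n d L B; H = Hp n d L B in
         (cmod (\<omega> (comm I C A)))\<^sup>2
           \<le> sqrt (Re (Dtil n d L B C))
             * sqrt (\<kappa> \<epsilon> * Re (\<omega> (acomm I C (madj C))) + Re (\<omega> (comm I (comm I (madj C) H) C)))
             * (Re (\<omega> (mmul I (mmul I A (Hpow n d L B \<epsilon>)) (madj A)))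
                + Re (\<omega> (mmul I (mmul I (madj A) (Hpow n d L B \<epsilon>)) A))))))"
proof (intro exI[of _ "1/2"] exI[of _ "\<lambda>\<epsilon>. 2 * \<epsilon>"] conjI ballI allI impI)
  show "((\<lambda>\<epsilon>::real. 2 * \<epsilon>) \<longlongrightarrow> 0) (at_right 0)"
  proof -
    have "((\<lambda>\<epsilon>::real. 2 * \<epsilon>) \<longlongrightarrow> 2 * 0) (at_right 0)" by (intro tendsto_intros)
    then show ?thesis by simp
  qed
  fix \<epsilon> :: real and L B A C assume "\<epsilon> \<in> {0<..<1/2}"
  then have eps: "0 < \<epsilon>" "\<epsilon> < 1/2" by auto
  then show "2 * \<epsilon> > 0" by simp
  show "let I = confs n d L; \<omega> = omega n d L B; H = Hp n d L B in
         (cmod (\<omega> (comm I C A)))\<^sup>2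
           \<le> sqrt (Re (Dtil n d L B C))
             * sqrt (2 * \<epsilon> * Re (\<omega> (acomm I C (madj C))) + Re (\<omega> (comm I (comm I (madj C) H) C)))
             * (Re (\<omega> (mmul I (mmul I A (Hpow n d L B \<epsilon>)) (madj A)))
                + Re (\<omega> (mmul I (mmul I (madj A) (Hpow n d L B \<epsilon>)) A)))"
    unfolding Let_def Dtil_def Hpow_def Hinv_def omega_eq_ground_expect Pex_eq Hcal_eq_shifted_ham
    by (rule hermitian_ground_commutator_bound[OF finite_confs confs_nonempty hermitian_Hp eps])
qed (simp_all)

end
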